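(* Let $r>0$, let $\Theta\subset\mathbb{R}^d$ be compact and convex, and let $\{p(\cdot\mid\boldsymbol{\rho}):\boldsymbol{\rho}\in\Theta\}$ be a parametric family of densities on a sample space $\Omega$ such that for every $z\in\Omega$, $\boldsymbol{\rho}\mapsto\log p(z\mid\boldsymbol{\rho})$ is twice differentiable on an open set containing $\Theta$ and satisfies $\lambda_{\min}(-\nabla^2_{\boldsymbol{\rho}}\log p(z\mid\boldsymbol{\rho}))\ge\sigma^2$ for all $\boldsymbol{\rho}\in\Theta$, for some $\sigma^2>0$. Let $\boldsymbol{\theta}\in\Theta$ and let $\boldsymbol{Z}_1,\boldsymbol{Z}_2,\dots$ be i.i.d. with density $p(\cdot\mid\boldsymbol{\theta})$, distributed as $\boldsymbol{Z}$. Assume $\mathbb{E}[\nabla_{\boldsymbol{\rho}}\log p(\boldsymbol{Z}\mid\boldsymbol{\rho})|_{\boldsymbol{\rho}=\boldsymbol{\theta}}]=0$ and $\mathbb{E}[\|\nabla_{\boldsymbol{\rho}}\log p(\boldsymbol{Z}\mid\boldsymbol{\rho})|_{\boldsymbol{\rho}=\boldsymbol{\theta}}\|^{r+1}]<\infty$. Let $L_t(\boldsymbol{\rho})=\sum_{s=1}^t\log p(\boldsymbol{Z}_s\mid\boldsymbol{\rho})$ and $\boldsymbol{\theta}_t=\arg\max_{\boldsymbol{\rho}\in\Theta}L_t(\boldsymbol{\rho})$. Then $\boldsymbol{\theta}_t$ converges $r$-quickly to $\boldsymbol{\theta}$.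
   Context: A sequence of random vectors $\boldsymbol{Z}_t$ converges $r$-quickly to $\boldsymbol{Z}$ if for every $\epsilon>0$, $\mathbb{E}[L_\epsilon^r]<\infty$, where $L_\epsilon:=\sup\{t\in\mathbb{N}:\|\boldsymbol{Z}_t-\boldsymbol{Z}\|>\epsilon\}$ (with $\sup\emptyset=0$). $\lambda_{\min}$ denotes the smallest eigenvalue; $\|\cdot\|$ is the Euclidean norm. *)

theory Defs
  imports "HOL-Probability.Probability"
begin

definition real_eigenvalues :: "real^'n^'n \<Rightarrow> real set" where
  "real_eigenvalues A = {c. \<exists>v. v \<noteq> 0 \<and> A *v v = c *\<^sub>R v}"

definition lambda_min :: "real^'n^'n \<Rightarrow> real" where
  "lambda_min A = Min (real_eigenvalues A)"

text \<open>L_eps = sup of indices t (t \<ge> 1) with norm (X_t - Y) > eps, sup of empty set = 0.\<close>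
definition last_exit :: "real \<Rightarrow> (nat \<Rightarrow> 'o \<Rightarrow> 'b::real_normed_vector) \<Rightarrow> ('o \<Rightarrow> 'b) \<Rightarrow> 'o \<Rightarrow> nat set" where
  "last_exit eps X Y \<omega> = {t. 1 \<le> t \<and> norm (X t \<omega> - Y \<omega>) > eps}"

definition last_exit_pow :: "real \<Rightarrow> real \<Rightarrow> (nat \<Rightarrow> 'o \<Rightarrow> 'b::real_normed_vector) \<Rightarrow> ('o \<Rightarrow> 'b) \<Rightarrow> 'o \<Rightarrow> ennreal" where
  "last_exit_pow r eps X Y \<omega> =
     (if finite (last_exit eps X Y \<omega>) then ennreal (real (Sup (last_exit eps X Y \<omega>)) powr r) else \<infinity>)"

definition r_quickly :: "'o measure \<Rightarrow> real \<Rightarrow> (nat \<Rightarrow> 'o \<Rightarrow> 'b::real_normed_vector) \<Rightarrow> ('o \<Rightarrow> 'b) \<Rightarrow> bool" where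
  "r_quickly M r X Y \<longleftrightarrow> (\<forall>eps>0. (\<integral>\<^sup>+ \<omega>. last_exit_pow r eps X Y \<omega> \<partial>M) < \<infinity>)"

end

theory Submission
  imports Defs
begin

(*
  The maximum likelihood property together with strong concavity of the log-likelihood L_t gives
  the deterministic bound  t sigma^2/2 |theta_t - theta|^2 <= grad L_t(theta) . (theta_t - theta),
  hence  t sigma^2/2 |theta_t - theta| <= sum_e |sum_{s<=t} grad log p(Z_s|theta) . e|  for an
  orthonormal basis e of the directions in which Theta extends from theta.  Each projected score
  is a centred i.i.d. sequence with a finite (r+1)-th moment, so it suffices to show that for such
  a sequence the last time t with |S_t| > eps t has a finite r-th moment.  For this, truncate the
  summands at level t^alpha, alpha = (r+2)/(2(r+1)): a deviation |S_t| > eps t forces either a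
  single summand of size ~ t (controlled by the (r+1)-th moment), or a fixed number m of summands
  above the level (probability O(t^m t^(-m(r+2)/2))), or a deviation of the truncated centred sum
  (Bernstein: exp(-b t^(1-alpha))); all three are summable against the weight t^r.
*)

section \<open>Bernstein's inequality\<close>

lemma exp_le_one_plus_x_plus_sq:
  fixes x :: real
  assumes "\<bar>x\<bar> \<le> 1"
  shows "exp x \<le> 1 + x + x\<^sup>2"
proof (cases "x \<ge> 0")
  case True
  then show ?thesis using exp_bound[of x] assms by auto
next
  case False
  define y where "y = - x"
  have y: "0 \<le> y" "y \<le> 1" using False assms by (auto simp: y_def)
  have pos: "0 < 1 + y + y\<^sup>2 / 2" using y by (simp add: add_pos_nonneg)
  have "1 - y + y\<^sup>2 = (y - 1/2)\<^sup>2 + 3/4" by (simp add: power2_eq_square field_simps)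
  then have pos2: "0 < 1 - y + y\<^sup>2" by (simp add: add_nonneg_pos)
  have "(1 + y + y\<^sup>2 / 2) * (1 - y + y\<^sup>2) = 1 + (y\<^sup>2 + y^3 + y^4) / 2"
    by (simp add: field_simps power2_eq_square power3_eq_cube power4_eq_xxxx)
  then have key: "1 \<le> (1 + y + y\<^sup>2 / 2) * (1 - y + y\<^sup>2)" using y by simp
  have "exp x = inverse (exp y)" by (simp add: y_def exp_minus)
  also have "\<dots> \<le> inverse (1 + y + y\<^sup>2 / 2)"
    using exp_lower_Taylor_quadratic[OF y(1)] pos by (intro le_imp_inverse_le) auto
  also have "\<dots> \<le> 1 - y + y\<^sup>2" using key pos pos2 by (simp add: field_simps)
  finally show ?thesis by (simp add: y_def)
qed

lemma (in prob_space) nn_integral_exp_le_exp_variance: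
  assumes [measurable]: "W \<in> borel_measurable M"
    and bnd: "\<And>\<omega>. \<omega> \<in> space M \<Longrightarrow> \<bar>W \<omega>\<bar> \<le> b"
    and mean: "expectation W = 0"
    and var: "expectation (\<lambda>\<omega>. (W \<omega>)\<^sup>2) \<le> v"
    and l: "l > 0" "l * b \<le> 1"
  shows "(\<integral>\<^sup>+\<omega>. ennreal (exp (l * W \<omega>)) \<partial>M) \<le> ennreal (exp (l\<^sup>2 * v))"
proof -
  have iW: "integrable M W"
    by (rule integrable_const_bound[where B=b]) (use bnd in auto)
  have iW2: "integrable M (\<lambda>\<omega>. (W \<omega>)\<^sup>2)"
  proof (rule integrable_const_bound[where B="b\<^sup>2"])
    show "AE x in M. norm ((W x)\<^sup>2) \<le> b\<^sup>2"
      using bnd by (auto intro!: AE_I2 simp: abs_le_square_iff[symmetric])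
           (metis abs_le_square_iff abs_of_nonneg bnd abs_ge_zero order_trans power2_abs)
  qed simp
  have pt: "exp (l * W \<omega>) \<le> 1 + l * W \<omega> + l\<^sup>2 * (W \<omega>)\<^sup>2" if "\<omega> \<in> space M" for \<omega>
  proof -
    have "\<bar>l * W \<omega>\<bar> \<le> l * b"
      using bnd[OF that] l by (simp add: abs_mult mult_left_mono)
    with l have "\<bar>l * W \<omega>\<bar> \<le> 1" by linarith
    from exp_le_one_plus_x_plus_sq[OF this] show ?thesis by (simp add: power_mult_distrib)
  qed
  have "(\<integral>\<^sup>+\<omega>. ennreal (exp (l * W \<omega>)) \<partial>M)
      \<le> (\<integral>\<^sup>+\<omega>. ennreal (1 + l * W \<omega> + l\<^sup>2 * (W \<omega>)\<^sup>2) \<partial>M)"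
    by (intro nn_integral_mono ennreal_leI pt)
  also have "\<dots> = ennreal (\<integral>\<omega>. 1 + l * W \<omega> + l\<^sup>2 * (W \<omega>)\<^sup>2 \<partial>M)"
    using iW iW2 pt
    by (intro nn_integral_eq_integral) (auto intro!: AE_I2 order_trans[OF less_imp_le[OF exp_gt_zero]])
  also have "(\<integral>\<omega>. 1 + l * W \<omega> + l\<^sup>2 * (W \<omega>)\<^sup>2 \<partial>M) \<le> 1 + l\<^sup>2 * v"
    using iW iW2 mean var by (simp add: prob_space mult_left_mono)
  also have "\<dots> \<le> exp (l\<^sup>2 * v)" by (simp add: add.commute)
  finally show ?thesis by (simp add: ennreal_leI)
qed

lemma (in prob_space) bernstein_upper_tail:
  assumes fin: "finite I" and ind: "indep_vars (\<lambda>_. borel) W I"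
    and bnd: "\<And>i \<omega>. i \<in> I \<Longrightarrow> \<omega> \<in> space M \<Longrightarrow> \<bar>W i \<omega>\<bar> \<le> b"
    and mean: "\<And>i. i \<in> I \<Longrightarrow> expectation (W i) = 0"
    and var: "\<And>i. i \<in> I \<Longrightarrow> expectation (\<lambda>\<omega>. (W i \<omega>)\<^sup>2) \<le> v"
    and l: "l > 0" "l * b \<le> 1"
  shows "prob {\<omega>\<in>space M. x \<le> (\<Sum>i\<in>I. W i \<omega>)} \<le> exp (- l * x + real (card I) * (l\<^sup>2 * v))"
proof -
  have [measurable]: "W i \<in> borel_measurable M" if "i \<in> I" for i
    using ind that unfolding indep_vars_def by blast
  have "ennreal (prob {\<omega>\<in>space M. x \<le> (\<Sum>i\<in>I. W i \<omega>)})
      = emeasure M {\<omega>\<in>space M. (\<Sum>i\<in>I. W i \<omega>) \<ge> x}"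
    by (simp add: emeasure_eq_measure)
  also have "\<dots> \<le> ennreal (exp (-l * x)) *
      (\<integral>\<^sup>+\<omega>. ennreal (exp (l * (\<Sum>i\<in>I. W i \<omega>))) * indicator (space M) \<omega> \<partial>M)"
    by (intro Chernoff_ineq_nn_integral_ge l) (use fin in auto)
  also have "(\<integral>\<^sup>+\<omega>. ennreal (exp (l * (\<Sum>i\<in>I. W i \<omega>))) * indicator (space M) \<omega> \<partial>M)
      = (\<integral>\<^sup>+\<omega>. (\<Prod>i\<in>I. ennreal (exp (l * W i \<omega>))) \<partial>M)"
    by (intro nn_integral_cong) (simp_all add: sum_distrib_left exp_sum fin prod_ennreal)
  also have "\<dots> = (\<Prod>i\<in>I. \<integral>\<^sup>+\<omega>. ennreal (exp (l * W i \<omega>)) \<partial>M)"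
    by (intro indep_vars_nn_integral fin indep_vars_compose2[OF ind]) auto
  also have "ennreal (exp (-l * x)) * \<dots> \<le> ennreal (exp (-l * x)) * (\<Prod>i\<in>I. ennreal (exp (l\<^sup>2 * v)))"
    by (intro mult_left_mono prod_mono_ennreal nn_integral_exp_le_exp_variance[OF _ _ _ _ l])
       (auto intro: bnd mean var)
  also have "\<dots> = ennreal (exp (-l * x) * exp (l\<^sup>2 * v) ^ card I)"
    by (simp add: prod_ennreal ennreal_mult ennreal_power)
  also have "exp (-l * x) * exp (l\<^sup>2 * v) ^ card I = exp (- l * x + real (card I) * (l\<^sup>2 * v))"
    by (simp add: exp_add[symmetric] exp_of_nat_mult[symmetric])
  finally show ?thesis by (subst (asm) ennreal_le_iff) auto
qed

lemma (in prob_space) bernstein_two_sided_tail: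
  assumes fin: "finite I" and ind: "indep_vars (\<lambda>_. borel) W I"
    and bnd: "\<And>i \<omega>. i \<in> I \<Longrightarrow> \<omega> \<in> space M \<Longrightarrow> \<bar>W i \<omega>\<bar> \<le> b"
    and mean: "\<And>i. i \<in> I \<Longrightarrow> expectation (W i) = 0"
    and var: "\<And>i. i \<in> I \<Longrightarrow> expectation (\<lambda>\<omega>. (W i \<omega>)\<^sup>2) \<le> v"
    and l: "l > 0" "l * b \<le> 1"
  shows "prob {\<omega>\<in>space M. x \<le> \<bar>\<Sum>i\<in>I. W i \<omega>\<bar>} \<le> 2 * exp (- l * x + real (card I) * (l\<^sup>2 * v))"
proof -
  have [measurable]: "W i \<in> borel_measurable M" if "i \<in> I" for i
    using ind that unfolding indep_vars_def by blast
  have ind': "indep_vars (\<lambda>_. borel) (\<lambda>i \<omega>. - W i \<omega>) I"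
    by (rule indep_vars_compose2[OF ind, where Y="\<lambda>_. uminus", simplified]) measurable
  have "{\<omega>\<in>space M. x \<le> \<bar>\<Sum>i\<in>I. W i \<omega>\<bar>} =
        {\<omega>\<in>space M. x \<le> (\<Sum>i\<in>I. W i \<omega>)} \<union> {\<omega>\<in>space M. x \<le> (\<Sum>i\<in>I. - W i \<omega>)}"
    by (auto simp: sum_negf abs_if)
  then have "prob {\<omega>\<in>space M. x \<le> \<bar>\<Sum>i\<in>I. W i \<omega>\<bar>}
      \<le> prob {\<omega>\<in>space M. x \<le> (\<Sum>i\<in>I. W i \<omega>)} + prob {\<omega>\<in>space M. x \<le> (\<Sum>i\<in>I. - W i \<omega>)}"
    using fin by (simp add: measure_Un_le)
  also have "\<dots> \<le> 2 * exp (- l * x + real (card I) * (l\<^sup>2 * v))"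
    using bernstein_upper_tail[OF fin ind bnd mean var l, of x]
      bernstein_upper_tail[OF fin ind' _ _ _ l, of v x] bnd mean var
    by simp
  finally show ?thesis .
qed

section \<open>Large deviations of i.i.d. sums\<close>

lemma exp_neg_le_power:
  fixes y :: real
  assumes y: "y > 0" and N: "N \<ge> 1"
  shows "exp (- y) \<le> (real N / y) ^ N"
proof -
  have "y / real N \<le> exp (y / real N)"
    using exp_ge_add_one_self[of "y / real N"] by linarith
  then have "(y / real N) ^ N \<le> exp (y / real N) ^ N"
    using y by (intro power_mono) auto
  also have "\<dots> = exp y"
    using N by (simp add: exp_of_nat_mult[symmetric])
  finally have le: "(y / real N) ^ N \<le> exp y" .
  have "exp (- y) = inverse (exp y)" by (simp add: exp_minus)
  also have "\<dots> \<le> inverse ((y / real N) ^ N)"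
    using le y N by (intro le_imp_inverse_le) auto
  also have "\<dots> = (real N / y) ^ N" by (simp add: power_inverse[symmetric])
  finally show ?thesis .
qed

lemma summable_powr_mult_exp_neg_powr:
  fixes b g r :: real
  assumes b: "b > 0" and g: "g > 0"
  shows "summable (\<lambda>k. real k powr r * exp (- b * real k powr g))"
proof (rule summable_comparison_test)
  define N where "N = nat \<lceil>(r + 2) / g\<rceil> + 1"
  have N1: "N \<ge> 1" by (simp add: N_def)
  have gN: "r - g * real N \<le> -2"
  proof -
    have "(r + 2) / g \<le> real N" unfolding N_def by linarith
    then show ?thesis using g by (simp add: field_simps)
  qed
  define C where "C = (real N / b) ^ N"
  show "summable (\<lambda>k. C * real k powr (-2))"
    by (intro summable_mult) (simp add: summable_real_powr_iff)
  show "\<exists>N0. \<forall>n\<ge>N0. norm (real n powr r * exp (- b * real n powr g)) \<le> C * real n powr (-2)"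
  proof (intro exI allI impI)
    fix n :: nat
    assume n: "n \<ge> 1"
    then have npos: "real n > 0" by simp
    have "exp (- b * real n powr g) \<le> (real N / (b * real n powr g)) ^ N"
      using exp_neg_le_power[OF _ N1, of "b * real n powr g"] b npos by simp
    also have "\<dots> = C / real n powr (g * real N)"
      using npos b
      by (simp add: C_def power_divide power_mult_distrib powr_realpow[symmetric] powr_powr)
    finally have "real n powr r * exp (- b * real n powr g) \<le> real n powr r * (C / real n powr (g * real N))"
      by (intro mult_left_mono) auto
    also have "\<dots> = C * real n powr (r - g * real N)"
      using npos by (simp add: powr_diff)
    also have "\<dots> \<le> C * real n powr (-2)"
      using n gN b by (intro mult_left_mono powr_mono) (auto simp: C_def)
    finally show "norm (real n powr r * exp (- b * real n powr g)) \<le> C * real n powr (-2)"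
      by simp
  qed
qed

definition truncate :: "real \<Rightarrow> real \<Rightarrow> real" where
  "truncate c y = (if \<bar>y\<bar> \<le> c then y else 0)"

lemma truncate_measurable[measurable]: "truncate c \<in> borel_measurable borel"
  unfolding truncate_def by measurable

lemma abs_truncate_le: "\<bar>truncate c y\<bar> \<le> \<bar>y\<bar>"
  unfolding truncate_def by auto

lemma abs_truncate_le_level: "c \<ge> 0 \<Longrightarrow> \<bar>truncate c y\<bar> \<le> c"
  unfolding truncate_def by auto

lemma exists_large_term_if_large_sum:
  fixes y :: "nat \<Rightarrow> real"
  assumes fin: "finite S" and eps: "\<epsilon> > 0"
    and large: "\<epsilon> * real (card S) < \<bar>\<Sum>j\<in>S. y j\<bar>"
    and few: "card {j\<in>S. c < \<bar>y j\<bar>} < m"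
    and dev: "\<bar>\<Sum>j\<in>S. truncate c (y j) - \<mu>\<bar> < \<epsilon> / 4 * real (card S)"
    and mean: "\<bar>\<mu>\<bar> \<le> \<epsilon> / 4"
  shows "\<exists>j\<in>S. \<epsilon> / (4 * real m) * real (card S) < \<bar>y j\<bar>"
proof (rule ccontr)
  assume "\<not> ?thesis"
  then have small: "\<And>j. j \<in> S \<Longrightarrow> \<bar>y j\<bar> \<le> \<epsilon> / (4 * real m) * real (card S)"
    by (simp add: not_less)
  define T where "T = {j\<in>S. c < \<bar>y j\<bar>}"
  have "(\<Sum>j\<in>S. y j - truncate c (y j)) = (\<Sum>j\<in>T. y j)"
    using fin by (intro sum.mono_neutral_cong_right) (auto simp: T_def truncate_def)
  then have split: "(\<Sum>j\<in>S. y j) = (\<Sum>j\<in>S. truncate c (y j) - \<mu>) + real (card S) * \<mu> + (\<Sum>j\<in>T. y j)"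
    by (simp add: sum_subtractf)
  have "\<bar>\<Sum>j\<in>T. y j\<bar> \<le> (\<Sum>j\<in>T. \<bar>y j\<bar>)" by (rule sum_abs)
  also have "\<dots> \<le> real (card T) * (\<epsilon> / (4 * real m) * real (card S))"
    by (rule sum_bounded_above) (use small in \<open>auto simp: T_def\<close>)
  also have "\<dots> \<le> real m * (\<epsilon> / (4 * real m) * real (card S))"
    using few eps by (intro mult_right_mono) (auto simp: T_def)
  also have "\<dots> = \<epsilon> / 4 * real (card S)"
    using few by simp
  finally have tail: "\<bar>\<Sum>j\<in>T. y j\<bar> \<le> \<epsilon> / 4 * real (card S)" .
  have "\<bar>real (card S) * \<mu>\<bar> = real (card S) * \<bar>\<mu>\<bar>" by (simp add: abs_mult)
  also have "\<dots> \<le> real (card S) * (\<epsilon> / 4)" using mean by (intro mult_left_mono) auto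
  finally have bias: "\<bar>real (card S) * \<mu>\<bar> \<le> \<epsilon> / 4 * real (card S)" by (simp add: mult.commute)
  have "\<bar>\<Sum>j\<in>S. y j\<bar> \<le> \<bar>\<Sum>j\<in>S. truncate c (y j) - \<mu>\<bar> + \<bar>real (card S) * \<mu>\<bar> + \<bar>\<Sum>j\<in>T. y j\<bar>"
    unfolding split by (rule order_trans[OF abs_triangle_ineq add_right_mono[OF abs_triangle_ineq]])
  also have "\<dots> < 3 * (\<epsilon> / 4 * real (card S))" using dev bias tail by linarith
  also have "\<dots> \<le> \<epsilon> * real (card S)" using eps by simp
  finally have "\<bar>\<Sum>j\<in>S. y j\<bar> < \<epsilon> * real (card S)" .
  then show False using large by simp
qed

lemma suminf_powr_indicator_le:
  fixes y d r :: real
  assumes d: "d > 0" and r: "r \<ge> 0"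
  shows "(\<Sum>j. ennreal ((\<bar>y\<bar> / d) powr r) * indicator {y. d * real (Suc j) < \<bar>y\<bar>} y)
         \<le> ennreal ((\<bar>y\<bar> / d) powr (r + 1))"
proof -
  define N where "N = nat \<lfloor>\<bar>y\<bar> / d\<rfloor>"
  have N: "real N \<le> \<bar>y\<bar> / d" using d by (simp add: N_def)
  have out: "\<not> d * real (Suc j) < \<bar>y\<bar>" if "j \<ge> N" for j
  proof
    assume "d * real (Suc j) < \<bar>y\<bar>"
    then have "real (Suc j) < \<bar>y\<bar> / d" using d by (simp add: field_simps)
    then show False using that unfolding N_def by linarith
  qed
  have "(\<Sum>j. ennreal ((\<bar>y\<bar> / d) powr r) * indicator {y. d * real (Suc j) < \<bar>y\<bar>} y)
      = (\<Sum>j<N. ennreal ((\<bar>y\<bar> / d) powr r) * indicator {y. d * real (Suc j) < \<bar>y\<bar>} y)"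
  proof (rule suminf_finite)
    fix j
    assume "j \<notin> {..<N}"
    then show "ennreal ((\<bar>y\<bar> / d) powr r) * indicator {y. d * real (Suc j) < \<bar>y\<bar>} y = 0"
      using out[of j] by simp
  qed simp
  also have "\<dots> \<le> (\<Sum>j<N. ennreal ((\<bar>y\<bar> / d) powr r))"
    by (intro sum_mono) (simp add: indicator_def)
  also have "\<dots> = ennreal (real N * (\<bar>y\<bar> / d) powr r)"
    by (simp add: ennreal_of_nat_eq_real_of_nat ennreal_mult)
  also have "\<dots> \<le> ennreal ((\<bar>y\<bar> / d) powr (r + 1))"
  proof (cases "y = 0")
    case False
    then have "real N * (\<bar>y\<bar> / d) powr r \<le> (\<bar>y\<bar> / d) * (\<bar>y\<bar> / d) powr r"
      using N by (intro mult_right_mono) auto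
    also have "\<dots> = (\<bar>y\<bar> / d) powr (r + 1)" using d False by (simp add: powr_add)
    finally show ?thesis by (rule ennreal_leI)
  qed (simp add: N_def)
  finally show ?thesis .
qed

lemma suminf_less_top_of_summable_majorant:
  fixes g :: "nat \<Rightarrow> ennreal"
  assumes "\<And>k. g k \<le> ennreal (f k)" and "\<And>k. f k \<ge> 0" and "summable f"
  shows "(\<Sum>k. g k) < \<infinity>"
proof -
  have "(\<Sum>k. g k) \<le> (\<Sum>k. ennreal (f k))" by (intro suminf_le assms) auto
  also have "\<dots> = ennreal (\<Sum>k. f k)" using assms by (intro suminf_ennreal2) auto
  finally show ?thesis by (simp add: order.strict_trans1)
qed

lemma ennreal_le_suminf: "(f i :: ennreal) \<le> suminf f"
  using sum_le_suminf[of f "{i}"] by auto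

locale iid_zero_mean_moment = prob_space M for M :: "'a measure" +
  fixes Y :: "nat \<Rightarrow> 'a \<Rightarrow> real" and Y0 :: "'a \<Rightarrow> real" and r :: real
  assumes r_pos: "r > 0"
    and indep: "indep_vars (\<lambda>_. borel) Y {1..}"
    and Y0_measurable[measurable]: "Y0 \<in> borel_measurable M"
    and distr_Y: "\<And>s. s \<ge> 1 \<Longrightarrow> distr M borel (Y s) = distr M borel Y0"
    and integrable_moment: "integrable M (\<lambda>\<omega>. \<bar>Y0 \<omega>\<bar> powr (r + 1))"
    and mean_zero: "expectation Y0 = 0"
begin

lemma Y_measurable: "s \<ge> 1 \<Longrightarrow> Y s \<in> borel_measurable M"
  using indep unfolding indep_vars_def by auto

lemma Y_Suc_measurable[measurable]: "Y (Suc j) \<in> borel_measurable M"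
  by (rule Y_measurable) simp

lemma nn_integral_Y_eq:
  assumes "s \<ge> 1" "f \<in> borel_measurable borel"
  shows "(\<integral>\<^sup>+\<omega>. f (Y s \<omega>) \<partial>M) = (\<integral>\<^sup>+\<omega>. f (Y0 \<omega>) \<partial>M)"
proof -
  have "(\<integral>\<^sup>+\<omega>. f (Y s \<omega>) \<partial>M) = integral\<^sup>N (distr M borel (Y s)) f"
    using assms by (subst nn_integral_distr) (auto intro: Y_measurable)
  also have "\<dots> = (\<integral>\<^sup>+\<omega>. f (Y0 \<omega>) \<partial>M)"
    using assms by (simp add: distr_Y nn_integral_distr)
  finally show ?thesis .
qed

lemma integral_Y_eq:
  fixes f :: "real \<Rightarrow> real"
  assumes "s \<ge> 1" "f \<in> borel_measurable borel"
  shows "(\<integral>\<omega>. f (Y s \<omega>) \<partial>M) = (\<integral>\<omega>. f (Y0 \<omega>) \<partial>M)"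
proof -
  have "(\<integral>\<omega>. f (Y s \<omega>) \<partial>M) = integral\<^sup>L (distr M borel (Y s)) f"
    using assms by (subst integral_distr) (auto intro: Y_measurable)
  also have "\<dots> = (\<integral>\<omega>. f (Y0 \<omega>) \<partial>M)"
    using assms by (simp add: distr_Y integral_distr)
  finally show ?thesis .
qed

definition abs_moment :: real where
  "abs_moment = (\<integral>\<omega>. \<bar>Y0 \<omega>\<bar> powr (r + 1) \<partial>M)"

lemma abs_moment_nonneg: "abs_moment \<ge> 0"
  unfolding abs_moment_def by (rule integral_nonneg_AE) auto

lemma nn_integral_abs_moment: "(\<integral>\<^sup>+\<omega>. ennreal (\<bar>Y0 \<omega>\<bar> powr (r + 1)) \<partial>M) = ennreal abs_moment"
  unfolding abs_moment_def by (rule nn_integral_eq_integral[OF integrable_moment]) auto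

lemma abs_le_one_plus_powr: "\<bar>y\<bar> \<le> 1 + \<bar>y\<bar> powr (r + 1)"
proof (cases "\<bar>y\<bar> \<le> 1")
  case False
  then have "\<bar>y\<bar> powr 1 \<le> \<bar>y\<bar> powr (r + 1)" using r_pos by (intro powr_mono) auto
  then show ?thesis using False by simp
qed (smt (verit) powr_ge_zero)

lemma integrable_Y0: "integrable M Y0"
  by (rule Bochner_Integration.integrable_bound[where f="\<lambda>\<omega>. 1 + \<bar>Y0 \<omega>\<bar> powr (r + 1)"])
     (use integrable_moment abs_le_one_plus_powr in \<open>auto intro!: AE_I2 order_trans[OF _ abs_ge_self]\<close>)

lemma integral_abs_Y0_le: "(\<integral>\<omega>. \<bar>Y0 \<omega>\<bar> \<partial>M) \<le> 1 + abs_moment"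
proof -
  have "(\<integral>\<omega>. \<bar>Y0 \<omega>\<bar> \<partial>M) \<le> (\<integral>\<omega>. 1 + \<bar>Y0 \<omega>\<bar> powr (r + 1) \<partial>M)"
    by (intro integral_mono integrable_Y0 integrable_abs)
       (use integrable_moment abs_le_one_plus_powr in auto)
  then show ?thesis using integrable_moment by (simp add: abs_moment_def prob_space)
qed

definition large_term :: "real \<Rightarrow> nat \<Rightarrow> 'a \<Rightarrow> ennreal" where
  "large_term \<delta> j \<omega> = ennreal ((\<bar>Y j \<omega>\<bar> / \<delta>) powr r) * indicator {\<omega>. \<delta> * real j < \<bar>Y j \<omega>\<bar>} \<omega>"

lemma large_term_Suc_measurable[measurable]: "large_term \<delta> (Suc j) \<in> borel_measurable M"
  unfolding large_term_def by measurable

lemma nn_integral_large_terms_finite: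
  assumes \<delta>: "\<delta> > 0"
  shows "(\<integral>\<^sup>+\<omega>. (\<Sum>j. large_term \<delta> (Suc j) \<omega>) \<partial>M) < \<infinity>"
proof -
  define g where "g j y = ennreal ((\<bar>y\<bar> / \<delta>) powr r) * indicator {y. \<delta> * real (Suc j) < \<bar>y\<bar>} y"
    for j and y :: real
  have [measurable]: "g j \<in> borel_measurable borel" for j unfolding g_def by measurable
  have "(\<integral>\<^sup>+\<omega>. (\<Sum>j. large_term \<delta> (Suc j) \<omega>) \<partial>M) = (\<Sum>j. \<integral>\<^sup>+\<omega>. g j (Y (Suc j) \<omega>) \<partial>M)"
  proof (subst nn_integral_suminf)
    show "(\<Sum>j. integral\<^sup>N M (large_term \<delta> (Suc j))) = (\<Sum>j. \<integral>\<^sup>+\<omega>. g j (Y (Suc j) \<omega>) \<partial>M)"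
      by (intro suminf_cong nn_integral_cong) (simp add: large_term_def g_def indicator_def)
  qed measurable
  also have "\<dots> = (\<Sum>j. \<integral>\<^sup>+\<omega>. g j (Y0 \<omega>) \<partial>M)"
    by (intro suminf_cong nn_integral_Y_eq) auto
  also have "\<dots> = (\<integral>\<^sup>+\<omega>. (\<Sum>j. g j (Y0 \<omega>)) \<partial>M)"
    by (rule nn_integral_suminf[symmetric]) measurable
  also have "\<dots> \<le> (\<integral>\<^sup>+\<omega>. ennreal (\<bar>Y0 \<omega>\<bar> powr (r + 1)) * ennreal (1 / \<delta> powr (r + 1)) \<partial>M)"
    using suminf_powr_indicator_le[OF \<delta>, of r] r_pos \<delta>
    by (intro nn_integral_mono) (simp add: g_def powr_divide ennreal_mult'[symmetric])
  also have "\<dots> = ennreal abs_moment * ennreal (1 / \<delta> powr (r + 1))"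
    by (simp add: nn_integral_multc nn_integral_abs_moment)
  also have "\<dots> < \<infinity>" by (simp add: ennreal_mult_less_top)
  finally show ?thesis .
qed

lemma powr_le_large_terms:
  assumes \<delta>: "\<delta> > 0" and j: "j \<in> {1..k}" "\<delta> * real k < \<bar>Y j \<omega>\<bar>"
  shows "ennreal (real k powr r) \<le> (\<Sum>j. large_term \<delta> (Suc j) \<omega>)"
proof -
  have "\<delta> * real j \<le> \<delta> * real k" using j \<delta> by (intro mult_left_mono) auto
  then have j_exceeds: "\<delta> * real (Suc (j - 1)) < \<bar>Y (Suc (j - 1)) \<omega>\<bar>" using j by simp
  have "ennreal (real k powr r) \<le> ennreal ((\<bar>Y j \<omega>\<bar> / \<delta>) powr r)"
    using j \<delta> r_pos by (intro ennreal_leI powr_mono2) (auto simp: field_simps)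
  also have "\<dots> = large_term \<delta> (Suc (j - 1)) \<omega>"
    using j j_exceeds by (simp add: large_term_def)
  also have "\<dots> \<le> (\<Sum>j. large_term \<delta> (Suc j) \<omega>)" by (rule ennreal_le_suminf)
  finally show ?thesis .
qed

text \<open>The number of \<open>m\<close>-element sets of indices in \<open>{1..k}\<close> at which \<open>\<bar>Y j\<bar>\<close> exceeds \<open>c\<close>,
  written as a sum of products of indicators so that independence computes its integral.\<close>

definition exceedance_subsets :: "nat \<Rightarrow> real \<Rightarrow> nat \<Rightarrow> 'a \<Rightarrow> ennreal" where
  "exceedance_subsets m c k \<omega> =
     (\<Sum>J | J \<subseteq> {1..k} \<and> card J = m. \<Prod>j\<in>J. indicator {\<omega>. c < \<bar>Y j \<omega>\<bar>} \<omega>)"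

lemma indicator_exceedance_measurable:
  "j \<ge> 1 \<Longrightarrow> (\<lambda>\<omega>. indicator {\<omega>. c < \<bar>Y j \<omega>\<bar>} \<omega> :: ennreal) \<in> borel_measurable M"
  using Y_measurable[of j] by measurable

lemma exceedance_subsets_measurable[measurable]: "exceedance_subsets m c k \<in> borel_measurable M"
  unfolding exceedance_subsets_def
  by (intro borel_measurable_sum borel_measurable_prod_ennreal indicator_exceedance_measurable) auto

lemma one_le_exceedance_subsets:
  assumes "m \<le> card {j\<in>{1..k}. c < \<bar>Y j \<omega>\<bar>}"
  shows "1 \<le> exceedance_subsets m c k \<omega>"
proof -
  obtain J where J: "J \<subseteq> {j\<in>{1..k}. c < \<bar>Y j \<omega>\<bar>}" "card J = m"
    using obtain_subset_with_card_n[OF assms] by blast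
  have "(\<Prod>j\<in>J. indicator {\<omega>. c < \<bar>Y j \<omega>\<bar>} \<omega>) = (1 :: ennreal)"
    using J(1) by (intro prod.neutral) (auto simp: indicator_def)
  then have "(1 :: ennreal) = (\<Prod>j\<in>J. indicator {\<omega>. c < \<bar>Y j \<omega>\<bar>} \<omega>)" ..
  also have "\<dots> \<le> exceedance_subsets m c k \<omega>"
    unfolding exceedance_subsets_def using J
    by (intro member_le_sum) (auto intro: finite_subset[of _ "Pow {1..k}"])
  finally show ?thesis .
qed

lemma nn_integral_indicator_exceedance_le:
  assumes c: "c > 0" and j: "j \<ge> 1"
  shows "(\<integral>\<^sup>+\<omega>. indicator {\<omega>. c < \<bar>Y j \<omega>\<bar>} \<omega> \<partial>M) \<le> ennreal (abs_moment / c powr (r + 1))"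
proof -
  have "(\<integral>\<^sup>+\<omega>. indicator {\<omega>. c < \<bar>Y j \<omega>\<bar>} \<omega> \<partial>M) = (\<integral>\<^sup>+\<omega>. indicator {y. c < \<bar>y\<bar>} (Y0 \<omega>) \<partial>M)"
    using nn_integral_Y_eq[OF j, of "indicator {y. c < \<bar>y\<bar>}"] by (simp add: indicator_def)
  also have "\<dots> \<le> (\<integral>\<^sup>+\<omega>. ennreal (\<bar>Y0 \<omega>\<bar> powr (r + 1)) * ennreal (1 / c powr (r + 1)) \<partial>M)"
  proof (intro nn_integral_mono)
    fix \<omega>
    have "c powr (r + 1) \<le> \<bar>Y0 \<omega>\<bar> powr (r + 1)" if "c < \<bar>Y0 \<omega>\<bar>"
      using that c r_pos by (intro powr_mono2) auto
    then show "indicator {y. c < \<bar>y\<bar>} (Y0 \<omega>) \<le> ennreal (\<bar>Y0 \<omega>\<bar> powr (r + 1)) * ennreal (1 / c powr (r + 1))"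
      using c by (auto simp: indicator_def ennreal_mult'[symmetric] field_simps intro!: ennreal_leI)
  qed
  also have "\<dots> = (\<integral>\<^sup>+\<omega>. ennreal (\<bar>Y0 \<omega>\<bar> powr (r + 1)) \<partial>M) * ennreal (1 / c powr (r + 1))"
    by (rule nn_integral_multc) measurable
  also have "\<dots> = ennreal (abs_moment / c powr (r + 1))"
    using abs_moment_nonneg c by (simp add: nn_integral_abs_moment ennreal_mult'[symmetric])
  finally show ?thesis .
qed

lemma nn_integral_exceedance_subsets_le:
  assumes c: "c > 0"
  shows "(\<integral>\<^sup>+\<omega>. exceedance_subsets m c k \<omega> \<partial>M) \<le> ennreal (real k ^ m * (abs_moment / c powr (r + 1)) ^ m)"
proof -
  define q where "q = abs_moment / c powr (r + 1)"
  have q: "q \<ge> 0" using abs_moment_nonneg c by (simp add: q_def)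
  define \<J> where "\<J> = {J. J \<subseteq> {1..k} \<and> card J = m}"
  have "(\<integral>\<^sup>+\<omega>. exceedance_subsets m c k \<omega> \<partial>M)
      = (\<Sum>J\<in>\<J>. \<integral>\<^sup>+\<omega>. (\<Prod>j\<in>J. indicator {\<omega>. c < \<bar>Y j \<omega>\<bar>} \<omega>) \<partial>M)"
    unfolding exceedance_subsets_def \<J>_def
    by (intro nn_integral_sum borel_measurable_prod_ennreal indicator_exceedance_measurable) auto
  also have "\<dots> \<le> (\<Sum>J\<in>\<J>. ennreal (q ^ m))"
  proof (rule sum_mono)
    fix J
    assume J: "J \<in> \<J>"
    then have fin: "finite J" and sub: "J \<subseteq> {1..}"
      by (auto simp: \<J>_def intro: finite_subset)
    have "indep_vars (\<lambda>_. borel) (\<lambda>j \<omega>. indicator {y. c < \<bar>y\<bar>} (Y j \<omega>) :: ennreal) J"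
      by (rule indep_vars_compose2[OF indep_vars_subset[OF indep sub]]) measurable
    then have "indep_vars (\<lambda>_. borel) (\<lambda>j \<omega>. indicator {\<omega>. c < \<bar>Y j \<omega>\<bar>} \<omega> :: ennreal) J"
      by (simp add: indicator_def)
    then have "(\<integral>\<^sup>+\<omega>. (\<Prod>j\<in>J. indicator {\<omega>. c < \<bar>Y j \<omega>\<bar>} \<omega>) \<partial>M)
        = (\<Prod>j\<in>J. \<integral>\<^sup>+\<omega>. indicator {\<omega>. c < \<bar>Y j \<omega>\<bar>} \<omega> \<partial>M)"
      by (intro indep_vars_nn_integral fin) auto
    also have "\<dots> \<le> (\<Prod>j\<in>J. ennreal q)"
      using sub c by (intro prod_mono_ennreal) (auto simp: q_def intro!: nn_integral_indicator_exceedance_le)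
    also have "\<dots> = ennreal (q ^ m)" using J q by (simp add: \<J>_def prod_ennreal ennreal_power)
    finally show "(\<integral>\<^sup>+\<omega>. (\<Prod>j\<in>J. indicator {\<omega>. c < \<bar>Y j \<omega>\<bar>} \<omega>) \<partial>M) \<le> ennreal (q ^ m)" .
  qed
  also have "\<dots> = ennreal (real (k choose m) * q ^ m)"
    using q by (simp add: \<J>_def n_subsets ennreal_mult ennreal_of_nat_eq_real_of_nat)
  also have "\<dots> \<le> ennreal (real k ^ m * q ^ m)"
  proof (intro ennreal_leI mult_right_mono)
    have "k choose m \<le> k ^ m" by (cases "m \<le> k") (auto simp: binomial_le_pow binomial_eq_0)
    then show "real (k choose m) \<le> real k ^ m" by (metis of_nat_le_iff of_nat_power)
  qed (use q in simp)
  finally show ?thesis by (simp add: q_def)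
qed

definition trunc_mean :: "real \<Rightarrow> real" where
  "trunc_mean c = (\<integral>\<omega>. truncate c (Y0 \<omega>) \<partial>M)"

lemma integrable_truncate: "integrable M (\<lambda>\<omega>. truncate c (Y0 \<omega>))"
  by (rule Bochner_Integration.integrable_bound[OF integrable_abs[OF integrable_Y0]])
     (auto simp: abs_truncate_le)

lemma abs_trunc_mean_le:
  assumes c: "c \<ge> 0"
  shows "\<bar>trunc_mean c\<bar> \<le> c"
proof -
  have "\<bar>trunc_mean c\<bar> \<le> (\<integral>\<omega>. \<bar>truncate c (Y0 \<omega>)\<bar> \<partial>M)"
    unfolding trunc_mean_def by (rule integral_abs_bound)
  also have "\<dots> \<le> (\<integral>\<omega>. c \<partial>M)"
    by (intro integral_mono integrable_abs integrable_truncate) (auto simp: abs_truncate_le_level c)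
  finally show ?thesis by (simp add: prob_space)
qed

lemma abs_trunc_mean_le_tail:
  assumes c: "c > 0"
  shows "\<bar>trunc_mean c\<bar> \<le> abs_moment / c powr r"
proof -
  have tail: "\<bar>y - truncate c y\<bar> \<le> \<bar>y\<bar> powr (r + 1) / c powr r" for y
  proof (cases "\<bar>y\<bar> \<le> c")
    case False
    then have y: "\<bar>y\<bar> > 0" using c by simp
    have "\<bar>y\<bar> * c powr r \<le> \<bar>y\<bar> * \<bar>y\<bar> powr r"
      using False c r_pos by (intro mult_left_mono powr_mono2) auto
    also have "\<dots> = \<bar>y\<bar> powr (r + 1)" using y by (simp add: powr_add)
    finally show ?thesis using False c by (simp add: truncate_def field_simps)
  qed (simp add: truncate_def)
  have "trunc_mean c = - (\<integral>\<omega>. Y0 \<omega> - truncate c (Y0 \<omega>) \<partial>M)"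
    using integrable_Y0 integrable_truncate mean_zero by (simp add: trunc_mean_def)
  then have "\<bar>trunc_mean c\<bar> \<le> (\<integral>\<omega>. \<bar>Y0 \<omega> - truncate c (Y0 \<omega>)\<bar> \<partial>M)"
    using integral_abs_bound by simp
  also have "\<dots> \<le> (\<integral>\<omega>. \<bar>Y0 \<omega>\<bar> powr (r + 1) / c powr r \<partial>M)"
    by (intro integral_mono integrable_abs Bochner_Integration.integrable_diff integrable_Y0
        integrable_truncate integrable_divide integrable_moment tail)
  also have "\<dots> = abs_moment / c powr r" by (simp add: abs_moment_def)
  finally show ?thesis .
qed

definition centered_trunc :: "real \<Rightarrow> nat \<Rightarrow> 'a \<Rightarrow> real" where
  "centered_trunc c j \<omega> = truncate c (Y j \<omega>) - trunc_mean c"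

lemma indep_centered_trunc: "indep_vars (\<lambda>_. borel) (centered_trunc c) {1..k}"
proof -
  have "indep_vars (\<lambda>_. borel) (\<lambda>j \<omega>. truncate c (Y j \<omega>) - trunc_mean c) {1..k}"
    by (rule indep_vars_compose2[OF indep_vars_subset[OF indep], where Y="\<lambda>_ y. truncate c y - trunc_mean c"])
       auto
  then show ?thesis by (simp add: centered_trunc_def[abs_def])
qed

lemma centered_trunc_measurable[measurable]: "centered_trunc c j \<in> borel_measurable M" if "j \<ge> 1"
  using indep_centered_trunc[of c j] that unfolding indep_vars_def by auto

lemma expectation_centered_trunc: "j \<ge> 1 \<Longrightarrow> expectation (centered_trunc c j) = 0"
  using integral_Y_eq[of j "\<lambda>y. truncate c y - trunc_mean c"] integrable_truncate
  by (simp add: centered_trunc_def[abs_def] trunc_mean_def prob_space)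

lemma abs_centered_trunc_le: "c \<ge> 0 \<Longrightarrow> \<bar>centered_trunc c j \<omega>\<bar> \<le> 2 * c"
  using abs_truncate_le_level[of c "Y j \<omega>"] abs_trunc_mean_le[of c]
  unfolding centered_trunc_def by linarith

lemma second_moment_centered_trunc_le:
  assumes j: "j \<ge> 1" and c: "c \<ge> 0"
  shows "expectation (\<lambda>\<omega>. (centered_trunc c j \<omega>)\<^sup>2) \<le> c * (1 + abs_moment)"
proof -
  have sq: "integrable M (\<lambda>\<omega>. (truncate c (Y0 \<omega>))\<^sup>2)"
    using abs_truncate_le_level[OF c] c
    by (intro integrable_const_bound[where B="c\<^sup>2"]) (auto simp: abs_le_square_iff[symmetric])
  have pt: "(truncate c y)\<^sup>2 \<le> c * \<bar>y\<bar>" for y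
  proof -
    have "(truncate c y)\<^sup>2 = \<bar>truncate c y\<bar> * \<bar>truncate c y\<bar>"
      by (simp add: power2_eq_square)
    also have "\<dots> \<le> c * \<bar>y\<bar>"
      using c by (intro mult_mono abs_truncate_le_level abs_truncate_le) auto
    finally show ?thesis .
  qed
  have "expectation (\<lambda>\<omega>. (centered_trunc c j \<omega>)\<^sup>2) = variance (\<lambda>\<omega>. truncate c (Y0 \<omega>))"
    using integral_Y_eq[OF j, of "\<lambda>y. (truncate c y - trunc_mean c)\<^sup>2"]
    by (simp add: centered_trunc_def trunc_mean_def)
  also have "\<dots> \<le> expectation (\<lambda>\<omega>. (truncate c (Y0 \<omega>))\<^sup>2)"
    using integrable_truncate sq by (simp add: variance_eq)
  also have "\<dots> \<le> expectation (\<lambda>\<omega>. c * \<bar>Y0 \<omega>\<bar>)"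
    using sq integrable_Y0 pt by (intro integral_mono) auto
  also have "\<dots> \<le> c * (1 + abs_moment)"
    using integral_abs_Y0_le c by (simp add: mult_left_mono)
  finally show ?thesis .
qed

lemma prob_centered_trunc_sum_ge:
  assumes c: "c > 0" and a: "0 < a" "a \<le> 1/2"
  shows "prob {\<omega>\<in>space M. x \<le> \<bar>\<Sum>j\<in>{1..k}. centered_trunc c j \<omega>\<bar>}
           \<le> 2 * exp (- (a / c) * x + real k * (a\<^sup>2 / c) * (1 + abs_moment))"
proof -
  have "prob {\<omega>\<in>space M. x \<le> \<bar>\<Sum>j\<in>{1..k}. centered_trunc c j \<omega>\<bar>}
      \<le> 2 * exp (- (a / c) * x + real (card {1..k}) * ((a / c)\<^sup>2 * (c * (1 + abs_moment))))"
  proof (rule bernstein_two_sided_tail[where b="2 * c" and l="a / c"])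
    show "\<And>j \<omega>. j \<in> {1..k} \<Longrightarrow> \<omega> \<in> space M \<Longrightarrow> \<bar>centered_trunc c j \<omega>\<bar> \<le> 2 * c"
      using c by (intro abs_centered_trunc_le) simp
    show "\<And>j. j \<in> {1..k} \<Longrightarrow> expectation (\<lambda>\<omega>. (centered_trunc c j \<omega>)\<^sup>2) \<le> c * (1 + abs_moment)"
      using c by (intro second_moment_centered_trunc_le) auto
    show "a / c * (2 * c) \<le> 1" using c a by simp
  qed (use c a indep_centered_trunc in \<open>auto intro: expectation_centered_trunc\<close>)
  also have "(a / c)\<^sup>2 * (c * (1 + abs_moment)) = (a\<^sup>2 / c) * (1 + abs_moment)"
    using c by (simp add: power2_eq_square field_simps)
  finally show ?thesis by (simp add: mult.assoc)
qed

text \<open>The exponent of the truncation level lies strictly between \<open>1/2\<close> and \<open>1\<close>: it is large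
  enough that \<open>m\<close> simultaneous exceedances are summable against the weight \<open>k powr r\<close>,
  and small enough that Bernstein's bound for the truncated sum decays like \<open>exp (- b * k powr \<gamma>)\<close>.\<close>

definition level :: "nat \<Rightarrow> real" where
  "level k = real k powr ((r + 2) / (2 * (r + 1)))"

lemma one_le_level: "k \<ge> 1 \<Longrightarrow> 1 \<le> level k"
  using r_pos by (simp add: level_def ge_one_powr_ge_zero)

lemma level_powr: "level k powr (r + 1) = real k powr ((r + 2) / 2)"
proof -
  have e: "(r + 2) / (2 * (r + 1)) * (r + 1) = (r + 2) / 2" using r_pos by (simp add: field_simps)
  show ?thesis unfolding level_def powr_powr e ..
qed

lemma divide_level:
  assumes "k \<ge> 1"
  shows "real k / level k = real k powr (r / (2 * (r + 1)))"
proof -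
  have "r / (2 * (r + 1)) = 1 - (r + 2) / (2 * (r + 1))" using r_pos by (simp add: field_simps)
  then show ?thesis using assms by (simp add: level_def powr_diff)
qed

lemma exceedance_series_finite:
  assumes m: "r * real m > 2 * (r + 1)"
  shows "(\<Sum>k. ennreal (real k powr r) * (\<integral>\<^sup>+\<omega>. exceedance_subsets m (level k) k \<omega> \<partial>M)) < \<infinity>"
proof (rule suminf_less_top_of_summable_majorant)
  define f where "f k = abs_moment ^ m * real k powr (r - r * real m / 2)" for k
  show "summable f"
    unfolding f_def using m by (intro summable_mult) (simp add: summable_real_powr_iff)
  show "f k \<ge> 0" for k by (simp add: f_def abs_moment_nonneg)
  show "ennreal (real k powr r) * (\<integral>\<^sup>+\<omega>. exceedance_subsets m (level k) k \<omega> \<partial>M) \<le> ennreal (f k)" for k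
  proof (cases "k = 0")
    case False
    then have k: "real k > 0" by simp
    have "ennreal (real k powr r) * (\<integral>\<^sup>+\<omega>. exceedance_subsets m (level k) k \<omega> \<partial>M)
        \<le> ennreal (real k powr r) * ennreal (real k ^ m * (abs_moment / level k powr (r + 1)) ^ m)"
      using one_le_level[of k] False by (intro mult_left_mono nn_integral_exceedance_subsets_le) auto
    also have "\<dots> = ennreal (real k powr r * (real k ^ m * (abs_moment / level k powr (r + 1)) ^ m))"
      using abs_moment_nonneg by (simp add: ennreal_mult)
    also have "real k powr r * (real k ^ m * (abs_moment / level k powr (r + 1)) ^ m)
        = abs_moment ^ m * (real k powr r * real k powr real m / real k powr (real m * ((r + 2) / 2)))"
      using k by (simp add: level_powr power_divide powr_realpow[symmetric] powr_powr mult.commute)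
    also have "real k powr r * real k powr real m / real k powr (real m * ((r + 2) / 2))
        = real k powr (r + real m - real m * ((r + 2) / 2))"
      by (simp add: powr_add powr_diff)
    also have "r + real m - real m * ((r + 2) / 2) = r - r * real m / 2"
      by (simp add: field_simps)
    also have "abs_moment ^ m * real k powr (r - r * real m / 2) = f k"
      by (simp add: f_def)
    finally show ?thesis .
  qed (use r_pos in simp)
qed

definition deviation_event :: "real \<Rightarrow> nat \<Rightarrow> 'a set" where
  "deviation_event e k = {\<omega>\<in>space M. e * real k \<le> \<bar>\<Sum>j\<in>{1..k}. centered_trunc (level k) j \<omega>\<bar>}"

lemma deviation_event_sets[measurable]: "deviation_event e k \<in> sets M"
proof -
  have "(\<lambda>\<omega>. \<Sum>j\<in>{1..k}. centered_trunc (level k) j \<omega>) \<in> borel_measurable M"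
    by (intro borel_measurable_sum centered_trunc_measurable) auto
  then show ?thesis unfolding deviation_event_def by measurable
qed

lemma deviation_series_finite:
  assumes eps: "\<epsilon> > 0"
  shows "(\<Sum>k. ennreal (real k powr r) * emeasure M (deviation_event \<epsilon> k)) < \<infinity>"
proof (rule suminf_less_top_of_summable_majorant)
  define K where "K = 1 + abs_moment"
  have K: "K \<ge> 1" using abs_moment_nonneg by (simp add: K_def)
  define a where "a = min (1/2) (\<epsilon> / (2 * K))"
  have a: "0 < a" "a \<le> 1/2" "a * K \<le> \<epsilon> / 2"
    using eps K by (auto simp: a_def min_def field_simps)
  define \<gamma> where "\<gamma> = r / (2 * (r + 1))"
  define f where "f k = 2 * (real k powr r * exp (- (a * \<epsilon> / 2) * real k powr \<gamma>))" for k
  show "summable f"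
    unfolding f_def using a eps r_pos
    by (intro summable_mult summable_powr_mult_exp_neg_powr) (auto simp: \<gamma>_def)
  show "f k \<ge> 0" for k by (simp add: f_def)
  show "ennreal (real k powr r) * emeasure M (deviation_event \<epsilon> k) \<le> ennreal (f k)" for k
  proof (cases "k = 0")
    case False
    then have k: "k \<ge> 1" by simp
    have c: "level k > 0" using one_le_level[OF k] by simp
    have "- (a / level k) * (\<epsilon> * real k) + real k * (a\<^sup>2 / level k) * K
        = (real k / level k) * a * (- \<epsilon> + a * K)"
      using c by (simp add: power2_eq_square field_simps)
    also have "\<dots> \<le> (real k / level k) * a * (- \<epsilon> / 2)"
      using a c by (intro mult_left_mono) auto
    also have "\<dots> = - (a * \<epsilon> / 2) * real k powr \<gamma>"
      using divide_level[OF k] by (simp add: \<gamma>_def)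
    finally have tail: "prob (deviation_event \<epsilon> k) \<le> 2 * exp (- (a * \<epsilon> / 2) * real k powr \<gamma>)"
      using prob_centered_trunc_sum_ge[OF c a(1,2), of "\<epsilon> * real k" k] unfolding K_def deviation_event_def
      by (smt (verit) exp_mono)
    have "real k powr r * prob (deviation_event \<epsilon> k) \<le> f k"
      unfolding f_def using mult_left_mono[OF tail, of "real k powr r"] by (simp add: mult_ac)
    then show ?thesis
      by (simp add: emeasure_eq_measure ennreal_mult[symmetric] ennreal_leI)
  qed (use r_pos in simp)
qed

lemma eventually_abs_trunc_mean_level_le:
  assumes eps: "\<epsilon> > 0"
  shows "eventually (\<lambda>k. \<bar>trunc_mean (level k)\<bar> \<le> \<epsilon>) sequentially"
proof -
  define \<beta> where "\<beta> = r * (r + 2) / (2 * (r + 1))"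
  have "(\<lambda>k. abs_moment * real k powr (- \<beta>)) \<longlonglongrightarrow> abs_moment * 0"
    using r_pos
    by (intro tendsto_mult tendsto_const tendsto_neg_powr filterlim_real_sequentially)
       (simp add: \<beta>_def)
  then have "eventually (\<lambda>k. abs_moment * real k powr (- \<beta>) < \<epsilon>) sequentially"
    using eps by (simp add: order_tendstoD(2))
  then show ?thesis
    using eventually_ge_at_top[of 1]
  proof eventually_elim
    case (elim k)
    then have "\<bar>trunc_mean (level k)\<bar> \<le> abs_moment / level k powr r"
      using one_le_level[of k] by (intro abs_trunc_mean_le_tail) auto
    also have "level k powr r = real k powr \<beta>"
      unfolding level_def \<beta>_def powr_powr by (simp add: field_simps)
    also have "abs_moment / real k powr \<beta> = abs_moment * real k powr (- \<beta>)"
      by (simp add: powr_minus divide_inverse)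
    finally show ?case using elim by simp
  qed
qed

definition deviation_majorant :: "real \<Rightarrow> nat \<Rightarrow> nat \<Rightarrow> 'a \<Rightarrow> ennreal" where
  "deviation_majorant \<epsilon> m n0 \<omega> =
     ennreal (real n0 powr r) + (\<Sum>j. large_term (\<epsilon> / (4 * real m)) (Suc j) \<omega>) +
     (\<Sum>k. ennreal (real k powr r) *
        (exceedance_subsets m (level k) k \<omega> + indicator (deviation_event (\<epsilon> / 4) k) \<omega>))"

lemma deviation_majorant_measurable[measurable]: "deviation_majorant \<epsilon> m n0 \<in> borel_measurable M"
  unfolding deviation_majorant_def by measurable

lemma nn_integral_deviation_majorant_finite:
  assumes eps: "\<epsilon> > 0" and m: "r * real m > 2 * (r + 1)"
  shows "integral\<^sup>N M (deviation_majorant \<epsilon> m n0) < \<infinity>"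
proof -
  have "m > 0" using m r_pos by (cases m) auto
  then have \<delta>: "\<epsilon> / (4 * real m) > 0" using eps by simp
  have "(\<integral>\<^sup>+\<omega>. (\<Sum>k. ennreal (real k powr r) *
          (exceedance_subsets m (level k) k \<omega> + indicator (deviation_event (\<epsilon> / 4) k) \<omega>)) \<partial>M)
      = (\<Sum>k. ennreal (real k powr r) * (\<integral>\<^sup>+\<omega>. exceedance_subsets m (level k) k \<omega> \<partial>M)) +
        (\<Sum>k. ennreal (real k powr r) * emeasure M (deviation_event (\<epsilon> / 4) k))"
    by (simp add: nn_integral_suminf nn_integral_cmult nn_integral_add distrib_left suminf_add)
  also have "\<dots> < \<infinity>"
    using exceedance_series_finite[OF m] deviation_series_finite[of "\<epsilon> / 4"] eps by simp
  finally show ?thesis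
    unfolding deviation_majorant_def using nn_integral_large_terms_finite[OF \<delta>]
    by (simp add: nn_integral_add emeasure_space_1)
qed

text \<open>For large \<open>k\<close>, a partial sum exceeding \<open>\<epsilon> * k\<close> forces one of three events, each charged
  to one summand of the majorant: a single summand exceeds \<open>\<epsilon> * k / (4 * m)\<close>, at least \<open>m\<close>
  summands exceed the truncation level, or the truncated centred sum deviates by \<open>\<epsilon> * k / 4\<close>.\<close>

lemma powr_le_deviation_majorant:
  assumes eps: "\<epsilon> > 0"
    and n0: "\<And>k. k \<ge> n0 \<Longrightarrow> \<bar>trunc_mean (level k)\<bar> \<le> \<epsilon> / 4"
    and \<omega>: "\<omega> \<in> space M" and k: "k \<ge> 1" and large: "\<epsilon> * real k < \<bar>\<Sum>s\<in>{1..k}. Y s \<omega>\<bar>"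
  shows "ennreal (real k powr r) \<le> deviation_majorant \<epsilon> m n0 \<omega>"
proof -
  define \<delta> where "\<delta> = \<epsilon> / (4 * real m)"
  define B where "B = (\<Sum>k. ennreal (real k powr r) *
      (exceedance_subsets m (level k) k \<omega> + indicator (deviation_event (\<epsilon> / 4) k) \<omega>))"
  have majorant: "deviation_majorant \<epsilon> m n0 \<omega> = ennreal (real n0 powr r) + (\<Sum>j. large_term \<delta> (Suc j) \<omega>) + B"
    by (simp add: deviation_majorant_def \<delta>_def B_def)
  have via_B: "ennreal (real k powr r) \<le> deviation_majorant \<epsilon> m n0 \<omega>"
    if "1 \<le> exceedance_subsets m (level k) k \<omega> + indicator (deviation_event (\<epsilon> / 4) k) \<omega>"
  proof -
    have "ennreal (real k powr r) \<le> ennreal (real k powr r) *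
        (exceedance_subsets m (level k) k \<omega> + indicator (deviation_event (\<epsilon> / 4) k) \<omega>)"
      using mult_left_mono[OF that] by simp
    also have "\<dots> \<le> B" unfolding B_def by (rule ennreal_le_suminf)
    finally show ?thesis unfolding majorant by (simp add: order_trans[OF _ add_increasing])
  qed
  consider (early) "k < n0" | (exceed) "m \<le> card {j\<in>{1..k}. level k < \<bar>Y j \<omega>\<bar>}"
    | (deviate) "\<omega> \<in> deviation_event (\<epsilon> / 4) k"
    | (single) "n0 \<le> k" "card {j\<in>{1..k}. level k < \<bar>Y j \<omega>\<bar>} < m" "\<omega> \<notin> deviation_event (\<epsilon> / 4) k"
    by fastforce
  then show ?thesis
  proof cases
    case early
    then have "ennreal (real k powr r) \<le> ennreal (real n0 powr r)"
      using r_pos by (intro ennreal_leI powr_mono2) auto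
    also have "\<dots> \<le> deviation_majorant \<epsilon> m n0 \<omega>" unfolding majorant by (simp add: add.assoc)
    finally show ?thesis .
  next
    case exceed
    then show ?thesis using one_le_exceedance_subsets by (intro via_B) (simp add: add_increasing2)
  next
    case deviate
    then show ?thesis by (intro via_B) simp
  next
    case single
    have "\<exists>j\<in>{1..k}. \<epsilon> / (4 * real m) * real (card {1..k}) < \<bar>Y j \<omega>\<bar>"
    proof (rule exists_large_term_if_large_sum[where c="level k" and \<mu>="trunc_mean (level k)"])
      show "\<bar>\<Sum>j\<in>{1..k}. truncate (level k) (Y j \<omega>) - trunc_mean (level k)\<bar> < \<epsilon> / 4 * real (card {1..k})"
        using single(3) \<omega> by (simp add: deviation_event_def centered_trunc_def not_le)
    qed (use eps large single(2) n0[OF single(1)] in auto)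
    then obtain j where j: "j \<in> {1..k}" "\<delta> * real k < \<bar>Y j \<omega>\<bar>" by (auto simp: \<delta>_def)
    have "\<delta> > 0" using single(2) eps by (simp add: \<delta>_def)
    from powr_le_large_terms[OF this j] show ?thesis
      unfolding majorant by (simp add: order_trans[OF _ add_increasing2] add_increasing)
  qed
qed

theorem large_deviation_majorant:
  assumes eps: "\<epsilon> > 0"
  shows "\<exists>R. R \<in> borel_measurable M \<and> integral\<^sup>N M R < \<infinity> \<and>
           (\<forall>\<omega>\<in>space M. \<forall>k\<ge>1. \<epsilon> * real k < \<bar>\<Sum>s\<in>{1..k}. Y s \<omega>\<bar> \<longrightarrow> ennreal (real k powr r) \<le> R \<omega>)"
proof -
  define m :: nat where "m = nat \<lceil>2 * (r + 1) / r\<rceil> + 1"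
  have m: "r * real m > 2 * (r + 1)"
  proof -
    have "2 * (r + 1) / r < real m" unfolding m_def by linarith
    then show ?thesis using r_pos by (simp add: field_simps)
  qed
  obtain n0 where n0: "\<And>k. k \<ge> n0 \<Longrightarrow> \<bar>trunc_mean (level k)\<bar> \<le> \<epsilon> / 4"
    using eventually_abs_trunc_mean_level_le[of "\<epsilon> / 4"] eps by (auto simp: eventually_sequentially)
  show ?thesis
    using nn_integral_deviation_majorant_finite[OF eps m] powr_le_deviation_majorant[OF eps n0]
    by (intro exI[of _ "deviation_majorant \<epsilon> m n0"]) auto
qed

end

section \<open>Hessians and strong concavity\<close>

lemma has_real_derivative_along_line:
  fixes f :: "'a::real_inner \<Rightarrow> real"
  assumes "(f has_derivative (\<lambda>v. g \<bullet> v)) (at (p + s *\<^sub>R k))"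
  shows "((\<lambda>u. f (p + u *\<^sub>R k)) has_real_derivative (g \<bullet> k)) (at s)"
proof -
  have "((\<lambda>u. p + u *\<^sub>R k) has_derivative (\<lambda>u. u *\<^sub>R k)) (at s)"
    by (auto intro!: derivative_eq_intros)
  from diff_chain_at[OF this assms]
  have "((\<lambda>u. f (p + u *\<^sub>R k)) has_derivative (\<lambda>u. g \<bullet> (u *\<^sub>R k))) (at s)"
    by (simp add: o_def)
  moreover have "(\<lambda>u. g \<bullet> (u *\<^sub>R k)) = (*) (g \<bullet> k)" by (auto simp: fun_eq_iff)
  ultimately show ?thesis by (simp add: has_field_derivative_def)
qed

lemma second_difference_mvt:
  fixes f :: "'a::real_inner \<Rightarrow> real"
  assumes grad: "\<And>y. y \<in> U \<Longrightarrow> (f has_derivative (\<lambda>v. G y \<bullet> v)) (at y)"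
    and t: "t > 0"
    and U: "\<And>s. 0 \<le> s \<Longrightarrow> s \<le> t \<Longrightarrow> x + t *\<^sub>R h + s *\<^sub>R k \<in> U \<and> x + s *\<^sub>R k \<in> U"
  obtains \<xi> where "0 < \<xi>" "\<xi> < t"
    "f (x + t *\<^sub>R h + t *\<^sub>R k) - f (x + t *\<^sub>R h) - f (x + t *\<^sub>R k) + f x
       = t * ((G (x + t *\<^sub>R h + \<xi> *\<^sub>R k) - G (x + \<xi> *\<^sub>R k)) \<bullet> k)"
proof -
  define \<phi> where "\<phi> s = f (x + t *\<^sub>R h + s *\<^sub>R k) - f (x + s *\<^sub>R k)" for s
  have "(\<phi> has_real_derivative ((G (x + t *\<^sub>R h + s *\<^sub>R k) - G (x + s *\<^sub>R k)) \<bullet> k)) (at s)"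
    if "0 \<le> s" "s \<le> t" for s
    using DERIV_diff[OF has_real_derivative_along_line has_real_derivative_along_line, OF grad grad] U[OF that]
    unfolding \<phi>_def by (simp add: inner_diff_left)
  then obtain \<xi> where "0 < \<xi>" "\<xi> < t"
    "\<phi> t - \<phi> 0 = (t - 0) * ((G (x + t *\<^sub>R h + \<xi> *\<^sub>R k) - G (x + \<xi> *\<^sub>R k)) \<bullet> k)"
    using MVT2[of 0 t \<phi> "\<lambda>s. (G (x + t *\<^sub>R h + s *\<^sub>R k) - G (x + s *\<^sub>R k)) \<bullet> k"] t by auto
  then show ?thesis using that by (simp add: \<phi>_def)
qed

lemma inner_linear_approx_diff_le:
  assumes lin: "linear H"
    and y1: "norm (G y1 - G x - H (y1 - x)) \<le> e * norm (y1 - x)"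
    and y2: "norm (G y2 - G x - H (y2 - x)) \<le> e * norm (y2 - x)"
  shows "\<bar>(G y1 - G y2) \<bullet> k - H (y1 - y2) \<bullet> k\<bar> \<le> e * (norm (y1 - x) + norm (y2 - x)) * norm k"
proof -
  have "H (y1 - y2) = H (y1 - x) - H (y2 - x)"
    using linear_diff[OF lin, of "y1 - x" "y2 - x"] by simp
  then have "(G y1 - G y2) \<bullet> k - H (y1 - y2) \<bullet> k
      = (G y1 - G x - H (y1 - x)) \<bullet> k - (G y2 - G x - H (y2 - x)) \<bullet> k"
    by (simp add: inner_diff_left)
  then have "\<bar>(G y1 - G y2) \<bullet> k - H (y1 - y2) \<bullet> k\<bar>
      \<le> norm (G y1 - G x - H (y1 - x)) * norm k + norm (G y2 - G x - H (y2 - x)) * norm k"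
    using Cauchy_Schwarz_ineq2[of "G y1 - G x - H (y1 - x)" k]
      Cauchy_Schwarz_ineq2[of "G y2 - G x - H (y2 - x)" k] by linarith
  also have "\<dots> \<le> e * norm (y1 - x) * norm k + e * norm (y2 - x) * norm k"
    using y1 y2 by (intro add_mono mult_right_mono) auto
  finally show ?thesis by (simp add: distrib_left distrib_right)
qed

lemma second_difference_error_le:
  fixes f :: "'a::real_inner \<Rightarrow> real"
  assumes grad: "\<And>y. y \<in> ball x \<delta> \<Longrightarrow> (f has_derivative (\<lambda>v. G y \<bullet> v)) (at y)"
    and lin: "linear H"
    and approx: "\<And>y. y \<in> ball x \<delta> \<Longrightarrow> norm (G y - G x - H (y - x)) \<le> e * norm (y - x)"
    and e: "e \<ge> 0" and t: "t > 0" "t * (norm h + norm k) < \<delta>"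
  shows "\<bar>(f (x + t *\<^sub>R h + t *\<^sub>R k) - f (x + t *\<^sub>R h) - f (x + t *\<^sub>R k) + f x) - t\<^sup>2 * (k \<bullet> H h)\<bar>
           \<le> t\<^sup>2 * (e * (norm k * (norm h + 2 * norm k)))"
proof -
  have near: "norm (u *\<^sub>R h + s *\<^sub>R k) \<le> t * (norm h + norm k)"
    if "0 \<le> u" "u \<le> t" "0 \<le> s" "s \<le> t" for u s
    using that norm_triangle_ineq[of "u *\<^sub>R h" "s *\<^sub>R k"]
    by (simp add: distrib_left) (meson add_mono mult_right_mono norm_ge_zero order_trans)
  have in_ball: "x + v \<in> ball x \<delta>" if "norm v \<le> t * (norm h + norm k)" for v
    using that t(2) by (simp add: dist_norm)
  have "x + t *\<^sub>R h + s *\<^sub>R k \<in> ball x \<delta> \<and> x + s *\<^sub>R k \<in> ball x \<delta>" if "0 \<le> s" "s \<le> t" for s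
    using in_ball[OF near[of t s]] in_ball[OF near[of 0 s]] that t(1) by (simp add: add.assoc)
  then obtain \<xi> where \<xi>: "0 < \<xi>" "\<xi> < t" and
    \<Delta>: "f (x + t *\<^sub>R h + t *\<^sub>R k) - f (x + t *\<^sub>R h) - f (x + t *\<^sub>R k) + f x
        = t * ((G (x + t *\<^sub>R h + \<xi> *\<^sub>R k) - G (x + \<xi> *\<^sub>R k)) \<bullet> k)"
    using second_difference_mvt[OF grad t(1)] by blast
  define y1 where "y1 = x + t *\<^sub>R h + \<xi> *\<^sub>R k"
  define y2 where "y2 = x + \<xi> *\<^sub>R k"
  have y1: "norm (y1 - x) \<le> t * (norm h + norm k)"
    using near[of t \<xi>] \<xi> t by (simp add: y1_def add.assoc)
  have y2: "norm (y2 - x) \<le> t * norm k"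
    using \<xi> by (simp add: y2_def mult_right_mono)
  have "y1 \<in> ball x \<delta>" using in_ball[OF y1] by simp
  note a1 = approx[OF this]
  have "norm (y2 - x) \<le> t * (norm h + norm k)"
    using y2 t(1) by (smt (verit) mult_left_mono norm_ge_zero)
  then have "y2 \<in> ball x \<delta>" using in_ball by force
  note a2 = approx[OF this]
  have "H (y1 - y2) \<bullet> k = t * (k \<bullet> H h)"
    by (simp add: y1_def y2_def linear_scale[OF lin] inner_commute)
  then have "\<bar>(G y1 - G y2) \<bullet> k - t * (k \<bullet> H h)\<bar> \<le> e * (norm (y1 - x) + norm (y2 - x)) * norm k"
    using inner_linear_approx_diff_le[OF lin a1 a2, of k] by simp
  also have "\<dots> \<le> e * (t * (norm h + norm k) + t * norm k) * norm k"
    using y1 y2 e by (intro mult_right_mono mult_left_mono add_mono) auto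
  also have "\<dots> = t * (e * (norm k * (norm h + 2 * norm k)))" by (simp add: algebra_simps)
  finally have "t * \<bar>(G y1 - G y2) \<bullet> k - t * (k \<bullet> H h)\<bar> \<le> t * (t * (e * (norm k * (norm h + 2 * norm k))))"
    using t(1) by (intro mult_left_mono) auto
  moreover have "(f (x + t *\<^sub>R h + t *\<^sub>R k) - f (x + t *\<^sub>R h) - f (x + t *\<^sub>R k) + f x) - t\<^sup>2 * (k \<bullet> H h)
      = t * ((G y1 - G y2) \<bullet> k - t * (k \<bullet> H h))"
    unfolding \<Delta> y1_def y2_def by (simp add: power2_eq_square right_diff_distrib mult.assoc)
  ultimately show ?thesis using t(1) by (simp add: abs_mult power2_eq_square mult.assoc)
qed

lemma second_difference_error_small:
  fixes f :: "'a::real_inner \<Rightarrow> real"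
  assumes U: "open U" "x \<in> U"
    and grad: "\<And>y. y \<in> U \<Longrightarrow> (f has_derivative (\<lambda>v. G y \<bullet> v)) (at y)"
    and hess: "(G has_derivative H) (at x)" and e: "e > 0"
  shows "\<exists>d>0. \<forall>t. 0 < t \<and> t < d \<longrightarrow>
    \<bar>(f (x + t *\<^sub>R h + t *\<^sub>R k) - f (x + t *\<^sub>R h) - f (x + t *\<^sub>R k) + f x) - t\<^sup>2 * (k \<bullet> H h)\<bar>
      \<le> t\<^sup>2 * (e * (norm k * (norm h + 2 * norm k)))"
proof -
  obtain d1 where d1: "d1 > 0"
    "\<And>y. norm (y - x) < d1 \<Longrightarrow> norm (G y - G x - H (y - x)) \<le> e * norm (y - x)"
    using hess e unfolding has_derivative_at_alt by blast
  obtain d0 where d0: "d0 > 0" "ball x d0 \<subseteq> U" using U open_contains_ball by blast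
  define \<delta> where "\<delta> = min d0 d1"
  have lin: "linear H" using hess by (intro bounded_linear.linear has_derivative_bounded_linear)
  have approx: "norm (G y - G x - H (y - x)) \<le> e * norm (y - x)" if "y \<in> ball x \<delta>" for y
  proof -
    have "norm (y - x) < d1" using that by (simp add: \<delta>_def dist_norm norm_minus_commute)
    then show ?thesis by (rule d1(2))
  qed
  have hk: "0 < norm h + norm k + 1" by (simp add: add_nonneg_pos)
  show ?thesis
  proof (intro exI[of _ "\<delta> / (norm h + norm k + 1)"] conjI allI impI)
    show "0 < \<delta> / (norm h + norm k + 1)" using d0 d1 hk by (simp add: \<delta>_def)
    fix t :: real
    assume t: "0 < t \<and> t < \<delta> / (norm h + norm k + 1)"
    then have "t * (norm h + norm k) < \<delta>" using hk by (simp add: field_simps)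
    then show "\<bar>(f (x + t *\<^sub>R h + t *\<^sub>R k) - f (x + t *\<^sub>R h) - f (x + t *\<^sub>R k) + f x) - t\<^sup>2 * (k \<bullet> H h)\<bar>
        \<le> t\<^sup>2 * (e * (norm k * (norm h + 2 * norm k)))"
      using d0(2) approx e t by (intro second_difference_error_le[where \<delta>=\<delta>] lin) (auto simp: \<delta>_def intro: grad)
  qed
qed

lemma second_difference_quotient_tendsto:
  fixes f :: "'a::real_inner \<Rightarrow> real"
  assumes U: "open U" "x \<in> U"
    and grad: "\<And>y. y \<in> U \<Longrightarrow> (f has_derivative (\<lambda>v. G y \<bullet> v)) (at y)"
    and hess: "(G has_derivative H) (at x)"
  shows "((\<lambda>t. (f (x + t *\<^sub>R h + t *\<^sub>R k) - f (x + t *\<^sub>R h) - f (x + t *\<^sub>R k) + f x) / t\<^sup>2)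
           \<longlongrightarrow> k \<bullet> H h) (at_right 0)"
proof (rule tendstoI)
  fix e :: real
  assume "e > 0"
  define C where "C = norm k * (norm h + 2 * norm k)"
  have C: "C \<ge> 0" by (simp add: C_def)
  define e' where "e' = e / (C + 1)"
  have e': "e' > 0" "e' * C < e"
    using \<open>e > 0\<close> C by (auto simp: e'_def field_simps)
  obtain d where "d > 0" and bound: "\<And>t. 0 < t \<Longrightarrow> t < d \<Longrightarrow>
    \<bar>(f (x + t *\<^sub>R h + t *\<^sub>R k) - f (x + t *\<^sub>R h) - f (x + t *\<^sub>R k) + f x) - t\<^sup>2 * (k \<bullet> H h)\<bar> \<le> t\<^sup>2 * (e' * C)"
    using second_difference_error_small[OF U grad hess e'(1), of h k] unfolding C_def by blast
  show "\<forall>\<^sub>F t in at_right 0.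
    dist ((f (x + t *\<^sub>R h + t *\<^sub>R k) - f (x + t *\<^sub>R h) - f (x + t *\<^sub>R k) + f x) / t\<^sup>2) (k \<bullet> H h) < e"
    unfolding eventually_at_right_field
  proof (intro exI[of _ d] conjI allI impI \<open>d > 0\<close>)
    fix t :: real
    assume t: "0 < t" "t < d"
    have t2: "0 < t\<^sup>2" using t(1) by simp
    have dist: "dist (X / t\<^sup>2) c = \<bar>X - t\<^sup>2 * c\<bar> / t\<^sup>2" for X c
    proof -
      have "X / t\<^sup>2 - c = (X - t\<^sup>2 * c) / t\<^sup>2" using t2 by (simp add: diff_divide_distrib)
      then show ?thesis unfolding dist_real_def using t2 by (simp only: abs_div_pos)
    qed
    have "dist ((f (x + t *\<^sub>R h + t *\<^sub>R k) - f (x + t *\<^sub>R h) - f (x + t *\<^sub>R k) + f x) / t\<^sup>2) (k \<bullet> H h)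
        \<le> t\<^sup>2 * (e' * C) / t\<^sup>2"
      unfolding dist using t2 by (intro divide_right_mono[OF bound[OF t]]) simp
    also have "\<dots> = e' * C" using t2 by (intro nonzero_mult_div_cancel_left) simp
    also have "\<dots> < e" by (rule e'(2))
    finally show "dist ((f (x + t *\<^sub>R h + t *\<^sub>R k) - f (x + t *\<^sub>R h) - f (x + t *\<^sub>R k) + f x) / t\<^sup>2) (k \<bullet> H h) < e" .
  qed
qed

lemma hessian_symmetric:
  fixes f :: "'a::real_inner \<Rightarrow> real"
  assumes "open U" "x \<in> U"
    and "\<And>y. y \<in> U \<Longrightarrow> (f has_derivative (\<lambda>v. G y \<bullet> v)) (at y)"
    and "(G has_derivative H) (at x)"
  shows "k \<bullet> H h = h \<bullet> H k"
proof (rule tendsto_unique[OF trivial_limit_at_right_real])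
  show "((\<lambda>t. (f (x + t *\<^sub>R h + t *\<^sub>R k) - f (x + t *\<^sub>R h) - f (x + t *\<^sub>R k) + f x) / t\<^sup>2)
      \<longlongrightarrow> k \<bullet> H h) (at_right 0)"
    by (rule second_difference_quotient_tendsto[OF assms])
  show "((\<lambda>t. (f (x + t *\<^sub>R h + t *\<^sub>R k) - f (x + t *\<^sub>R h) - f (x + t *\<^sub>R k) + f x) / t\<^sup>2)
      \<longlongrightarrow> h \<bullet> H k) (at_right 0)"
  proof -
    have e: "x + t *\<^sub>R k + t *\<^sub>R h = x + t *\<^sub>R h + t *\<^sub>R k" for t
      by (simp add: add.assoc add.commute)
    have "(\<lambda>t. (f (x + t *\<^sub>R k + t *\<^sub>R h) - f (x + t *\<^sub>R k) - f (x + t *\<^sub>R h) + f x) / t\<^sup>2)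
        = (\<lambda>t. (f (x + t *\<^sub>R h + t *\<^sub>R k) - f (x + t *\<^sub>R h) - f (x + t *\<^sub>R k) + f x) / t\<^sup>2)"
      by (rule ext) (simp add: e algebra_simps)
    then show ?thesis using second_difference_quotient_tendsto[OF assms, of k h] by simp
  qed
qed

text \<open>Eigenvectors of a symmetric matrix for distinct eigenvalues are orthogonal, so there are at
  most \<open>CARD('n)\<close> eigenvalues; this is what makes the \<open>Min\<close> in \<open>lambda_min\<close> meaningful.\<close>

lemma finite_real_eigenvalues:
  fixes A :: "real^'n^'n"
  assumes sym: "\<And>x y. x \<bullet> (A *v y) = y \<bullet> (A *v x)"
  shows "finite (real_eigenvalues A)"
proof (rule ccontr)
  assume inf: "infinite (real_eigenvalues A)"
  define ev where "ev c = (SOME v. v \<noteq> 0 \<and> A *v v = c *\<^sub>R v)" for c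
  have ev: "ev c \<noteq> 0 \<and> A *v ev c = c *\<^sub>R ev c" if "c \<in> real_eigenvalues A" for c
  proof -
    from that have "\<exists>v. v \<noteq> 0 \<and> A *v v = c *\<^sub>R v" by (simp add: real_eigenvalues_def)
    then show ?thesis unfolding ev_def by (rule someI_ex)
  qed
  have orth: "ev c1 \<bullet> ev c2 = 0"
    if "c1 \<in> real_eigenvalues A" "c2 \<in> real_eigenvalues A" "c1 \<noteq> c2" for c1 c2
  proof -
    have "c2 * (ev c1 \<bullet> ev c2) = ev c1 \<bullet> (A *v ev c2)" using ev[OF that(2)] by simp
    also have "\<dots> = ev c2 \<bullet> (A *v ev c1)" by (rule sym)
    also have "\<dots> = c1 * (ev c1 \<bullet> ev c2)" using ev[OF that(1)] by (simp add: inner_commute)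
    finally show ?thesis using that(3) by auto
  qed
  obtain E where E: "finite E" "card E = CARD('n) + 1" "E \<subseteq> real_eigenvalues A"
    using infinite_arbitrarily_large[OF inf] by blast
  have inj: "inj_on ev E"
  proof (rule inj_onI)
    fix c1 c2
    assume c: "c1 \<in> E" "c2 \<in> E" "ev c1 = ev c2"
    show "c1 = c2"
    proof (rule ccontr)
      assume "c1 \<noteq> c2"
      then have "ev c1 \<bullet> ev c1 = 0" using orth[of c1 c2] c E(3) by auto
      then show False using ev[of c1] c E(3) by auto
    qed
  qed
  have "pairwise orthogonal (ev ` E)"
    unfolding pairwise_def orthogonal_def using orth E(3) by fastforce
  moreover have "0 \<notin> ev ` E" using ev E(3) by fastforce
  ultimately have "independent (ev ` E)" by (rule pairwise_orthogonal_independent)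
  then have "card (ev ` E) \<le> DIM(real^'n)" using independent_bound by blast
  moreover have "card (ev ` E) = CARD('n) + 1" using card_image[OF inj] E(2) by simp
  ultimately show False by simp
qed

text \<open>If \<open>v0\<close> minimises the Rayleigh quotient, perturbing it along \<open>w = A v0 - \<mu> v0\<close> changes
  \<open>q - \<mu> * norm\<^sup>2\<close> by \<open>2 s (norm w)\<^sup>2 + O(s\<^sup>2)\<close>, which is negative for small \<open>s < 0\<close> unless \<open>w = 0\<close>.\<close>

lemma eigenvector_if_min_quadratic_form:
  fixes A :: "real^'n^'n"
  assumes sym: "\<And>x y. x \<bullet> (A *v y) = y \<bullet> (A *v x)" and nv0: "norm v0 = 1"
    and min: "\<And>x. (v0 \<bullet> (A *v v0)) * (norm x)\<^sup>2 \<le> x \<bullet> (A *v x)"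
  shows "A *v v0 = (v0 \<bullet> (A *v v0)) *\<^sub>R v0"
proof (rule ccontr)
  define q where "q x = x \<bullet> (A *v x)" for x
  define \<mu> where "\<mu> = q v0"
  define w where "w = A *v v0 - \<mu> *\<^sub>R v0"
  assume "A *v v0 \<noteq> (v0 \<bullet> (A *v v0)) *\<^sub>R v0"
  then have w: "(norm w)\<^sup>2 > 0" by (simp add: w_def \<mu>_def q_def)
  define C where "C = q w - \<mu> * (norm w)\<^sup>2"
  have expand: "q (v0 + s *\<^sub>R w) - \<mu> * (norm (v0 + s *\<^sub>R w))\<^sup>2 = 2 * s * (norm w)\<^sup>2 + s\<^sup>2 * C" for s
  proof -
    have s1: "w \<bullet> (A *v v0) - \<mu> * (v0 \<bullet> w) = (norm w)\<^sup>2"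
      by (simp add: w_def power2_norm_eq_inner inner_diff_left inner_diff_right inner_commute)
         (simp add: algebra_simps)
    have s2: "v0 \<bullet> (A *v w) = w \<bullet> (A *v v0)" by (rule sym)
    have "q (v0 + s *\<^sub>R w) = q v0 + s * (v0 \<bullet> (A *v w)) + s * (w \<bullet> (A *v v0)) + s\<^sup>2 * q w"
      by (simp add: q_def matrix_vector_right_distrib matrix_vector_mult_scaleR inner_add_left
          inner_add_right power2_eq_square algebra_simps)
    moreover have "(norm (v0 + s *\<^sub>R w))\<^sup>2 = 1 + 2 * s * (v0 \<bullet> w) + s\<^sup>2 * (norm w)\<^sup>2"
    proof -
      have "(norm (v0 + s *\<^sub>R w))\<^sup>2 = (v0 + s *\<^sub>R w) \<bullet> (v0 + s *\<^sub>R w)"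
        by (simp add: power2_norm_eq_inner)
      also have "\<dots> = v0 \<bullet> v0 + 2 * s * (v0 \<bullet> w) + s\<^sup>2 * (w \<bullet> w)"
        by (simp add: inner_add_left inner_add_right inner_commute power2_eq_square algebra_simps)
      also have "v0 \<bullet> v0 = 1" using nv0 by (simp add: power2_norm_eq_inner[symmetric])
      also have "w \<bullet> w = (norm w)\<^sup>2" by (simp add: power2_norm_eq_inner)
      finally show ?thesis .
    qed
    ultimately show ?thesis using s1 s2
      by (simp add: C_def \<mu>_def algebra_simps power2_eq_square)
  qed
  define s where "s = - (norm w)\<^sup>2 / (\<bar>C\<bar> + 1)"
  have s: "s < 0" using w by (simp add: s_def add_pos_nonneg)
  have "\<bar>s * C\<bar> \<le> (norm w)\<^sup>2"
    by (simp add: s_def abs_mult field_simps)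
  then have "s * (2 * (norm w)\<^sup>2 + s * C) < 0"
    using s w by (intro mult_neg_pos) linarith+
  then have "2 * s * (norm w)\<^sup>2 + s\<^sup>2 * C < 0" by (simp add: power2_eq_square algebra_simps)
  then show False using min[of "v0 + s *\<^sub>R w"] expand[of s] by (simp add: q_def \<mu>_def)
qed

lemma min_quadratic_form_eigenvalue:
  fixes A :: "real^'n^'n"
  assumes sym: "\<And>x y. x \<bullet> (A *v y) = y \<bullet> (A *v x)"
  obtains \<mu> where "\<mu> \<in> real_eigenvalues A" "\<And>x. \<mu> * (norm x)\<^sup>2 \<le> x \<bullet> (A *v x)"
proof -
  define q where "q x = x \<bullet> (A *v x)" for x
  have "continuous_on (sphere 0 1) q"
    unfolding q_def by (intro continuous_intros linear_continuous_on) (auto intro: matrix_vector_mul_linear)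
  moreover have "sphere (0::real^'n) 1 \<noteq> {}" by (simp add: sphere_eq_empty)
  ultimately obtain v0 where v0: "v0 \<in> sphere 0 1" "\<And>y. y \<in> sphere 0 1 \<Longrightarrow> q v0 \<le> q y"
    using continuous_attains_inf[OF compact_sphere] by blast
  have nv0: "norm v0 = 1" using v0 by simp
  have q_ge: "q v0 * (norm x)\<^sup>2 \<le> q x" for x
  proof (cases "x = 0")
    case False
    then have "q v0 \<le> q (x /\<^sub>R norm x)" using v0 by simp
    also have "q (x /\<^sub>R norm x) = q x / (norm x)\<^sup>2"
      using False by (simp add: q_def matrix_vector_mult_scaleR power2_eq_square field_simps)
    finally show ?thesis using False by (simp add: field_simps)
  qed (simp add: q_def)
  have "A *v v0 = q v0 *\<^sub>R v0"
    using eigenvector_if_min_quadratic_form[OF sym nv0] q_ge by (simp add: q_def)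
  then have "q v0 \<in> real_eigenvalues A"
    using nv0 unfolding real_eigenvalues_def by (auto intro!: exI[of _ v0])
  then show ?thesis using that q_ge by (simp add: q_def)
qed

lemma quadratic_form_ge_lambda_min:
  fixes A :: "real^'n^'n"
  assumes sym: "\<And>x y. x \<bullet> (A *v y) = y \<bullet> (A *v x)"
  shows "lambda_min A * (norm v)\<^sup>2 \<le> v \<bullet> (A *v v)"
proof -
  obtain \<mu> where \<mu>: "\<mu> \<in> real_eigenvalues A" "\<And>x. \<mu> * (norm x)\<^sup>2 \<le> x \<bullet> (A *v x)"
    using min_quadratic_form_eigenvalue[OF sym] by blast
  have "lambda_min A \<le> \<mu>"
    unfolding lambda_min_def using \<mu>(1) finite_real_eigenvalues[OF sym] by (rule Min_le[rotated])
  then have "lambda_min A * (norm v)\<^sup>2 \<le> \<mu> * (norm v)\<^sup>2" by (intro mult_right_mono) auto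
  also have "\<dots> \<le> v \<bullet> (A *v v)" by (rule \<mu>(2))
  finally show ?thesis .
qed

lemma hessian_quadratic_form_le:
  fixes f :: "real^'n \<Rightarrow> real" and H :: "real^'n^'n"
  assumes "open U" "x \<in> U"
    and "\<And>y. y \<in> U \<Longrightarrow> (f has_derivative (\<lambda>v. G y \<bullet> v)) (at y)"
    and "(G has_derivative (\<lambda>v. H *v v)) (at x)"
    and "lambda_min (- H) \<ge> s"
  shows "v \<bullet> (H *v v) \<le> - s * (norm v)\<^sup>2"
proof -
  have neg: "(- H) *v u = - (H *v u)" for u
    by (simp add: vec_eq_iff matrix_vector_mult_def sum_negf)
  have "a \<bullet> ((- H) *v b) = b \<bullet> ((- H) *v a)" for a b
    using hessian_symmetric[OF assms(1-4), of a b] by (simp add: neg)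
  from quadratic_form_ge_lambda_min[OF this, of v] assms(5)
  have "s * (norm v)\<^sup>2 \<le> - (v \<bullet> (H *v v))"
    by (simp add: neg) (meson mult_right_mono order_trans zero_le_power2)
  then show ?thesis by simp
qed

lemma concave_second_order_bound:
  fixes g g' g'' :: "real \<Rightarrow> real"
  assumes g: "\<And>u. 0 \<le> u \<Longrightarrow> u \<le> 1 \<Longrightarrow> (g has_real_derivative g' u) (at u)"
    and g': "\<And>u. 0 \<le> u \<Longrightarrow> u \<le> 1 \<Longrightarrow> (g' has_real_derivative g'' u) (at u)"
    and g'': "\<And>u. 0 \<le> u \<Longrightarrow> u \<le> 1 \<Longrightarrow> g'' u \<le> - \<kappa>"
  shows "g 1 \<le> g 0 + g' 0 - \<kappa> / 2"
proof -
  have slope: "g' u + \<kappa> * u \<le> g' 0" if "0 \<le> u" "u \<le> 1" for u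
  proof -
    have "(\<lambda>w. g' w + \<kappa> * w) u \<le> (\<lambda>w. g' w + \<kappa> * w) 0"
    proof (rule DERIV_nonpos_imp_nonincreasing[OF that(1)])
      fix x
      assume x: "0 \<le> x" "x \<le> u"
      have "((\<lambda>w. g' w + \<kappa> * w) has_real_derivative (g'' x + \<kappa>)) (at x)"
        using g'[of x] x that by (auto intro!: derivative_eq_intros)
      moreover have "g'' x + \<kappa> \<le> 0" using g''[of x] x that by simp
      ultimately show "\<exists>d. ((\<lambda>w. g' w + \<kappa> * w) has_real_derivative d) (at x) \<and> d \<le> 0" by blast
    qed
    then show ?thesis by simp
  qed
  have "(\<lambda>w. g w - w * g' 0 + \<kappa> * w\<^sup>2 / 2) 1 \<le> (\<lambda>w. g w - w * g' 0 + \<kappa> * w\<^sup>2 / 2) 0"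
  proof (rule DERIV_nonpos_imp_nonincreasing[of 0 1])
    fix x :: real
    assume x: "0 \<le> x" "x \<le> 1"
    have "((\<lambda>w. g w - w * g' 0 + \<kappa> * w\<^sup>2 / 2) has_real_derivative (g' x - g' 0 + \<kappa> * x)) (at x)"
      using g[OF x] by (auto intro!: derivative_eq_intros simp: power2_eq_square algebra_simps)
    moreover have "g' x - g' 0 + \<kappa> * x \<le> 0" using slope[OF x] by linarith
    ultimately show "\<exists>d. ((\<lambda>w. g w - w * g' 0 + \<kappa> * w\<^sup>2 / 2) has_real_derivative d) (at x) \<and> d \<le> 0"
      by blast
  qed simp
  then show ?thesis by simp
qed

lemma strongly_concave_gradient_bound:
  fixes F :: "'a::real_inner \<Rightarrow> real" and GF :: "'a \<Rightarrow> 'a" and HF :: "'a \<Rightarrow> 'a \<Rightarrow> 'a"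
  assumes cvx: "convex \<Theta>" and \<theta>: "\<theta> \<in> \<Theta>" and \<rho>: "\<rho> \<in> \<Theta>" and sub: "\<Theta> \<subseteq> U"
    and grad: "\<And>y. y \<in> U \<Longrightarrow> (F has_derivative (\<lambda>v. GF y \<bullet> v)) (at y)"
    and hess: "\<And>y. y \<in> U \<Longrightarrow> (GF has_derivative HF y) (at y)"
    and conc: "\<And>y v. y \<in> \<Theta> \<Longrightarrow> v \<bullet> HF y v \<le> - c * (norm v)\<^sup>2"
    and le: "F \<theta> \<le> F \<rho>"
  shows "c / 2 * (norm (\<rho> - \<theta>))\<^sup>2 \<le> GF \<theta> \<bullet> (\<rho> - \<theta>)"
proof -
  define D where "D = \<rho> - \<theta>"
  define y where "y u = \<theta> + u *\<^sub>R D" for u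
  have y: "y u \<in> U" "y u \<in> \<Theta>" if "0 \<le> u" "u \<le> 1" for u
  proof -
    have "y u = (1 - u) *\<^sub>R \<theta> + u *\<^sub>R \<rho>" by (simp add: y_def D_def algebra_simps)
    then show "y u \<in> \<Theta>" using convexD[OF cvx \<theta> \<rho>, of "1 - u" u] that by simp
    then show "y u \<in> U" using sub by auto
  qed
  have line: "(y has_derivative (\<lambda>w. w *\<^sub>R D)) (at u)" for u
    unfolding y_def by (auto intro!: derivative_eq_intros)
  have "F (y 1) \<le> F (y 0) + GF (y 0) \<bullet> D - c * (norm D)\<^sup>2 / 2"
  proof (rule concave_second_order_bound[where g="\<lambda>u. F (y u)" and g'="\<lambda>u. GF (y u) \<bullet> D"
        and g''="\<lambda>u. HF (y u) D \<bullet> D" and \<kappa>="c * (norm D)\<^sup>2"])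
    fix u :: real
    assume u: "0 \<le> u" "u \<le> 1"
    have "((F \<circ> y) has_derivative (\<lambda>w. GF (y u) \<bullet> (w *\<^sub>R D))) (at u)"
      using diff_chain_at[OF line grad[OF y(1)[OF u]]] by (simp add: o_def)
    moreover have "(\<lambda>w. GF (y u) \<bullet> (w *\<^sub>R D)) = (*) (GF (y u) \<bullet> D)" by (auto simp: fun_eq_iff)
    ultimately show "((\<lambda>u. F (y u)) has_real_derivative GF (y u) \<bullet> D) (at u)"
      by (simp add: has_field_derivative_def o_def)
    have lin: "linear (HF (y u))"
      using hess[OF y(1)[OF u]] by (intro bounded_linear.linear has_derivative_bounded_linear)
    have "((\<lambda>w. GF (y w)) has_derivative (\<lambda>w. HF (y u) (w *\<^sub>R D))) (at u)"
      using diff_chain_at[OF line hess[OF y(1)[OF u]]] by (simp add: o_def)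
    then have "((\<lambda>w. GF (y w) \<bullet> D) has_derivative (\<lambda>w. HF (y u) (w *\<^sub>R D) \<bullet> D)) (at u)"
      by (rule has_derivative_inner_left)
    moreover have "(\<lambda>w. HF (y u) (w *\<^sub>R D) \<bullet> D) = (*) (HF (y u) D \<bullet> D)"
      by (auto simp: fun_eq_iff linear_scale[OF lin])
    ultimately show "((\<lambda>u. GF (y u) \<bullet> D) has_real_derivative HF (y u) D \<bullet> D) (at u)"
      by (simp add: has_field_derivative_def)
    show "HF (y u) D \<bullet> D \<le> - (c * (norm D)\<^sup>2)"
      using conc[OF y(2)[OF u], of D] by (simp add: inner_commute)
  qed
  then show ?thesis using le by (simp add: y_def D_def)
qed

lemma inner_le_norm_mult_sum_abs_inner:
  fixes B :: "'a::euclidean_space set"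
  assumes "pairwise orthogonal B" and unit: "\<And>e. e \<in> B \<Longrightarrow> norm e = 1"
    and "finite B" and "D \<in> span B"
  shows "S \<bullet> D \<le> norm D * (\<Sum>e\<in>B. \<bar>S \<bullet> e\<bar>)"
proof -
  have "S \<bullet> D = S \<bullet> (\<Sum>e\<in>B. (D \<bullet> e) *\<^sub>R e)"
    using orthonormal_basis_expand[OF assms(1) unit assms(4,3)] by simp
  also have "\<dots> = (\<Sum>e\<in>B. (D \<bullet> e) * (S \<bullet> e))" by (simp add: inner_sum_right)
  also have "\<dots> \<le> (\<Sum>e\<in>B. norm D * \<bar>S \<bullet> e\<bar>)"
  proof (rule sum_mono)
    fix e
    assume "e \<in> B"
    then have "\<bar>D \<bullet> e\<bar> \<le> norm D" using Cauchy_Schwarz_ineq2[of D e] unit by simp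
    then have "\<bar>D \<bullet> e\<bar> * \<bar>S \<bullet> e\<bar> \<le> norm D * \<bar>S \<bullet> e\<bar>" by (rule mult_right_mono) simp
    then show "(D \<bullet> e) * (S \<bullet> e) \<le> norm D * \<bar>S \<bullet> e\<bar>" by (simp add: abs_mult[symmetric])
  qed
  also have "\<dots> = norm D * (\<Sum>e\<in>B. \<bar>S \<bullet> e\<bar>)" by (simp add: sum_distrib_left)
  finally show ?thesis .
qed

lemma argmax_dist_le_sum_abs_score:
  fixes L :: "'s \<Rightarrow> real^'n \<Rightarrow> real" and G :: "'s \<Rightarrow> real^'n \<Rightarrow> real^'n"
    and H :: "'s \<Rightarrow> real^'n \<Rightarrow> real^'n^'n"
  assumes S: "finite S" and U: "open U" and cvx: "convex \<Theta>" and sub: "\<Theta> \<subseteq> U"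
    and \<theta>: "\<theta> \<in> \<Theta>" and \<rho>: "\<rho> \<in> \<Theta>"
    and grad: "\<And>s y. s \<in> S \<Longrightarrow> y \<in> U \<Longrightarrow> (L s has_derivative (\<lambda>v. G s y \<bullet> v)) (at y)"
    and hess: "\<And>s y. s \<in> S \<Longrightarrow> y \<in> U \<Longrightarrow> (G s has_derivative (\<lambda>v. H s y *v v)) (at y)"
    and conc: "\<And>s y. s \<in> S \<Longrightarrow> y \<in> \<Theta> \<Longrightarrow> lambda_min (- H s y) \<ge> \<sigma>"
    and max: "(\<Sum>s\<in>S. L s \<theta>) \<le> (\<Sum>s\<in>S. L s \<rho>)"
    and B: "pairwise orthogonal B" "\<And>e. e \<in> B \<Longrightarrow> norm e = 1" "finite B" "\<rho> - \<theta> \<in> span B"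
  shows "real (card S) * \<sigma> / 2 * norm (\<rho> - \<theta>) \<le> (\<Sum>e\<in>B. \<bar>\<Sum>s\<in>S. G s \<theta> \<bullet> e\<bar>)"
proof -
  define F where "F y = (\<Sum>s\<in>S. L s y)" for y
  define GF where "GF y = (\<Sum>s\<in>S. G s y)" for y
  define HF where "HF y v = (\<Sum>s\<in>S. H s y *v v)" for y v
  have gradF: "(F has_derivative (\<lambda>v. GF y \<bullet> v)) (at y)" if "y \<in> U" for y
    using has_derivative_sum[of S L "\<lambda>s v. G s y \<bullet> v"] grad that
    by (simp add: F_def[abs_def] GF_def inner_sum_left)
  have hessF: "(GF has_derivative HF y) (at y)" if "y \<in> U" for y
    using has_derivative_sum[of S G "\<lambda>s v. H s y *v v"] hess that
    by (simp add: GF_def[abs_def] HF_def[abs_def])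
  have concF: "v \<bullet> HF y v \<le> - (real (card S) * \<sigma>) * (norm v)\<^sup>2" if "y \<in> \<Theta>" for y v
  proof -
    have "v \<bullet> HF y v = (\<Sum>s\<in>S. v \<bullet> (H s y *v v))" by (simp add: HF_def inner_sum_right)
    also have "\<dots> \<le> (\<Sum>s\<in>S. - \<sigma> * (norm v)\<^sup>2)"
      using that sub by (intro sum_mono hessian_quadratic_form_le[OF U _ grad hess conc]) auto
    finally show ?thesis by simp
  qed
  have "real (card S) * \<sigma> / 2 * (norm (\<rho> - \<theta>))\<^sup>2 \<le> GF \<theta> \<bullet> (\<rho> - \<theta>)"
    by (rule strongly_concave_gradient_bound[OF cvx \<theta> \<rho> sub gradF hessF concF])
       (simp_all add: F_def max)
  also have "\<dots> \<le> norm (\<rho> - \<theta>) * (\<Sum>e\<in>B. \<bar>GF \<theta> \<bullet> e\<bar>)"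
    by (rule inner_le_norm_mult_sum_abs_inner[OF B])
  finally have "norm (\<rho> - \<theta>) * (real (card S) * \<sigma> / 2 * norm (\<rho> - \<theta>))
      \<le> norm (\<rho> - \<theta>) * (\<Sum>e\<in>B. \<bar>\<Sum>s\<in>S. G s \<theta> \<bullet> e\<bar>)"
    by (simp add: GF_def inner_sum_left power2_eq_square mult_ac)
  then show ?thesis
    by (cases "\<rho> = \<theta>") (auto simp: mult_le_cancel_left_pos)
qed

section \<open>r-quick convergence of the maximum likelihood estimator\<close>

lemma last_exit_pow_le:
  assumes r: "r > 0"
    and bnd: "\<And>k. k \<in> last_exit eps X Y \<omega> \<Longrightarrow> ennreal (real k powr r) \<le> R"
  shows "last_exit_pow r eps X Y \<omega> \<le> R"
proof (cases "finite (last_exit eps X Y \<omega>)")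
  case True
  show ?thesis
  proof (cases "last_exit eps X Y \<omega> = {}")
    case False
    with True have "Sup (last_exit eps X Y \<omega>) \<in> last_exit eps X Y \<omega>"
      by (simp add: cSup_eq_Max)
    then show ?thesis using bnd True by (simp add: last_exit_pow_def)
  qed (simp add: last_exit_pow_def)
next
  case False
  have "R = \<infinity>"
  proof (rule ccontr)
    assume "R \<noteq> \<infinity>"
    then obtain x where x: "x \<ge> 0" "R = ennreal x" by (cases R) auto
    obtain k where k: "k > nat \<lceil>x powr (1/r)\<rceil>" "k \<in> last_exit eps X Y \<omega>"
      using False unfolding infinite_nat_iff_unbounded by blast
    have "x powr (1/r) < real k" using k(1) by linarith
    then have "(x powr (1/r)) powr r < real k powr r" using r x by (intro powr_less_mono2) auto
    then have "x < real k powr r" using r x by (simp add: powr_powr)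
    moreover have "real k powr r \<le> x" using bnd[OF k(2)] x by (simp add: ennreal_le_iff)
    ultimately show False by simp
  qed
  then show ?thesis by simp
qed

lemma r_quicklyI:
  assumes r: "r > 0"
    and majorant: "\<And>eps. eps > 0 \<Longrightarrow> \<exists>R. integral\<^sup>N M R < \<infinity> \<and>
      (\<forall>\<omega>\<in>space M. \<forall>k\<ge>1. eps < norm (X k \<omega> - Y \<omega>) \<longrightarrow> ennreal (real k powr r) \<le> R \<omega>)"
  shows "r_quickly M r X Y"
  unfolding r_quickly_def
proof (intro allI impI)
  fix eps :: real
  assume "eps > 0"
  then obtain R where R: "integral\<^sup>N M R < \<infinity>"
    and bnd: "\<And>\<omega> k. \<omega> \<in> space M \<Longrightarrow> k \<ge> 1 \<Longrightarrow> eps < norm (X k \<omega> - Y \<omega>) \<Longrightarrow>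
      ennreal (real k powr r) \<le> R \<omega>"
    using majorant by blast
  have "(\<integral>\<^sup>+\<omega>. last_exit_pow r eps X Y \<omega> \<partial>M) \<le> integral\<^sup>N M R"
    by (intro nn_integral_mono last_exit_pow_le[OF r] bnd) (auto simp: last_exit_def)
  then show "(\<integral>\<^sup>+\<omega>. last_exit_pow r eps X Y \<omega> \<partial>M) < \<infinity>" using R by (rule le_less_trans)
qed

text \<open>The score is only known to be measurable in the directions along which \<open>\<Theta>\<close> extends
  from \<open>\<theta>\<close>: there it is a pointwise limit of measurable difference quotients.\<close>

lemma directional_derivative_measurable:
  fixes f :: "'a \<Rightarrow> 'v::real_inner \<Rightarrow> real" and g :: "'a \<Rightarrow> 'v"
  assumes cvx: "convex \<Theta>" and \<theta>: "\<theta> \<in> \<Theta>"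
    and meas: "\<And>\<rho>. \<rho> \<in> \<Theta> \<Longrightarrow> (\<lambda>z. f z \<rho>) \<in> borel_measurable N"
    and diff: "\<And>z. z \<in> space N \<Longrightarrow> (f z has_derivative (\<lambda>h. g z \<bullet> h)) (at \<theta>)"
    and v: "v \<in> span ((\<lambda>\<rho>. \<rho> - \<theta>) ` \<Theta>)"
  shows "(\<lambda>z. g z \<bullet> v) \<in> borel_measurable N"
  using v
proof (induction rule: span_induct)
  case base
  show "subspace {v. (\<lambda>z. g z \<bullet> v) \<in> borel_measurable N}"
    unfolding subspace_def by (auto simp: inner_add_right)
next
  case (step x)
  then obtain \<rho> where \<rho>: "\<rho> \<in> \<Theta>" "x = \<rho> - \<theta>" by auto
  define u where "u n = inverse (real (Suc n))" for n
  have in_\<Theta>: "\<theta> + u n *\<^sub>R x \<in> \<Theta>" for n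
  proof -
    have "\<theta> + u n *\<^sub>R x = (1 - u n) *\<^sub>R \<theta> + u n *\<^sub>R \<rho>" by (simp add: \<rho> algebra_simps)
    moreover have "0 \<le> u n" "u n \<le> 1" by (auto simp: u_def field_simps)
    ultimately show ?thesis using convexD[OF cvx \<theta> \<rho>(1), of "1 - u n" "u n"] by simp
  qed
  show "(\<lambda>z. g z \<bullet> x) \<in> borel_measurable N"
  proof (rule borel_measurable_LIMSEQ_real)
    show "(\<lambda>z. (f z (\<theta> + u n *\<^sub>R x) - f z \<theta>) / u n) \<in> borel_measurable N" for n
      using meas[OF in_\<Theta>] meas[OF \<theta>] by measurable
    fix z
    assume z: "z \<in> space N"
    have "((\<lambda>s. f z (\<theta> + s *\<^sub>R x)) has_real_derivative (g z \<bullet> x)) (at 0)"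
      using has_real_derivative_along_line[of "f z" "g z" \<theta> 0 x] diff[OF z] by simp
    then have "((\<lambda>s. (f z (\<theta> + s *\<^sub>R x) - f z \<theta>) / s) \<longlongrightarrow> g z \<bullet> x) (at 0)"
      unfolding has_field_derivative_iff by simp
    moreover have "filterlim u (at 0) sequentially"
    proof (rule filterlim_atI)
      show "u \<longlonglongrightarrow> 0" unfolding u_def by (rule LIMSEQ_inverse_real_of_nat)
    qed (simp add: u_def)
    ultimately show "(\<lambda>n. (f z (\<theta> + u n *\<^sub>R x) - f z \<theta>) / u n) \<longlonglongrightarrow> g z \<bullet> x"
      by (rule filterlim_compose)
  qed
qed

lemma iid_zero_mean_moment_inner:
  fixes g :: "'b \<Rightarrow> 'v::euclidean_space"
  assumes M: "prob_space M" and r: "r > 0"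
    and indep: "prob_space.indep_vars M (\<lambda>_. N) Z {1..}"
    and distr: "\<And>s. s \<ge> 1 \<Longrightarrow> distr M N (Z s) = distr M N Zg"
    and Zg: "Zg \<in> measurable M N"
    and g_e[measurable]: "(\<lambda>z. g z \<bullet> e) \<in> borel_measurable N" and e: "norm e \<le> 1"
    and mean: "has_bochner_integral M (\<lambda>\<omega>. g (Zg \<omega>)) 0"
    and moment: "integrable M (\<lambda>\<omega>. norm (g (Zg \<omega>)) powr (r + 1))"
  shows "iid_zero_mean_moment M (\<lambda>s \<omega>. g (Z s \<omega>) \<bullet> e) (\<lambda>\<omega>. g (Zg \<omega>) \<bullet> e) r"
proof -
  interpret prob_space M by (fact M)
  have Z: "Z s \<in> measurable M N" if "s \<ge> 1" for s
    using indep that unfolding indep_vars_def by auto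
  have Y0[measurable]: "(\<lambda>\<omega>. g (Zg \<omega>) \<bullet> e) \<in> borel_measurable M"
    using measurable_compose[OF Zg g_e] by (simp add: o_def)
  show ?thesis
  proof unfold_locales
    show "indep_vars (\<lambda>_. borel) (\<lambda>s \<omega>. g (Z s \<omega>) \<bullet> e) {1..}"
      by (rule indep_vars_compose2[OF indep]) simp
    show "distr M borel (\<lambda>\<omega>. g (Z s \<omega>) \<bullet> e) = distr M borel (\<lambda>\<omega>. g (Zg \<omega>) \<bullet> e)" if "s \<ge> 1" for s
      using distr_distr[OF g_e Z[OF that]] distr_distr[OF g_e Zg] distr[OF that] by (simp add: o_def)
    have "\<bar>g (Zg \<omega>) \<bullet> e\<bar> powr (r + 1) \<le> norm (g (Zg \<omega>)) powr (r + 1)" for \<omega>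
    proof -
      have "\<bar>g (Zg \<omega>) \<bullet> e\<bar> \<le> norm (g (Zg \<omega>)) * norm e" by (rule Cauchy_Schwarz_ineq2)
      also have "\<dots> \<le> norm (g (Zg \<omega>))" using e by (simp add: mult_left_le)
      finally show ?thesis using r by (intro powr_mono2) auto
    qed
    then show "integrable M (\<lambda>\<omega>. \<bar>g (Zg \<omega>) \<bullet> e\<bar> powr (r + 1))"
      by (intro Bochner_Integration.integrable_bound[OF moment]) auto
    show "expectation (\<lambda>\<omega>. g (Zg \<omega>) \<bullet> e) = 0"
      using has_bochner_integral_inner_left[OF mean, of e] by (simp add: has_bochner_integral_integral_eq)
  qed (use r in auto)
qed

lemma r_quickly_of_iid_projections:
  assumes M: "prob_space M" and r: "r > 0" and B: "finite B" and c: "c > 0"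
    and iid: "\<And>e. e \<in> B \<Longrightarrow> iid_zero_mean_moment M (W e) (W0 e) r"
    and dominated: "\<And>\<omega> k. \<omega> \<in> space M \<Longrightarrow> k \<ge> 1 \<Longrightarrow>
      c * real k * norm (X k \<omega> - Y \<omega>) \<le> (\<Sum>e\<in>B. \<bar>\<Sum>s\<in>{1..k}. W e s \<omega>\<bar>)"
  shows "r_quickly M r X Y"
proof (rule r_quicklyI[OF r])
  fix eps :: real
  assume eps: "eps > 0"
  define \<epsilon> where "\<epsilon> = c * eps / (real (card B) + 1)"
  have \<epsilon>: "\<epsilon> > 0" using c eps by (simp add: \<epsilon>_def add_pos_nonneg)
  obtain R where R: "\<And>e. e \<in> B \<Longrightarrow> R e \<in> borel_measurable M \<and> integral\<^sup>N M (R e) < \<infinity> \<and>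
      (\<forall>\<omega>\<in>space M. \<forall>k\<ge>1. \<epsilon> * real k < \<bar>\<Sum>s\<in>{1..k}. W e s \<omega>\<bar> \<longrightarrow> ennreal (real k powr r) \<le> R e \<omega>)"
    using iid_zero_mean_moment.large_deviation_majorant[OF iid \<epsilon>] by metis
  show "\<exists>R. integral\<^sup>N M R < \<infinity> \<and>
      (\<forall>\<omega>\<in>space M. \<forall>k\<ge>1. eps < norm (X k \<omega> - Y \<omega>) \<longrightarrow> ennreal (real k powr r) \<le> R \<omega>)"
  proof (intro exI conjI ballI allI impI)
    show "(\<integral>\<^sup>+\<omega>. (\<Sum>e\<in>B. R e \<omega>) \<partial>M) < \<infinity>"
      using R B by (simp add: nn_integral_sum less_top[symmetric])
    fix \<omega> k
    assume \<omega>: "\<omega> \<in> space M" and k: "1 \<le> k" and far: "eps < norm (X k \<omega> - Y \<omega>)"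
    have "\<exists>e\<in>B. \<epsilon> * real k < \<bar>\<Sum>s\<in>{1..k}. W e s \<omega>\<bar>"
    proof (rule ccontr)
      assume "\<not> ?thesis"
      then have "(\<Sum>e\<in>B. \<bar>\<Sum>s\<in>{1..k}. W e s \<omega>\<bar>) \<le> real (card B) * (\<epsilon> * real k)"
        by (intro sum_bounded_above) (auto simp: not_less)
      also have "\<dots> < c * real k * eps"
        using c eps k by (simp add: \<epsilon>_def field_simps)
      also have "\<dots> < c * real k * norm (X k \<omega> - Y \<omega>)"
        using c k far by simp
      finally show False using dominated[OF \<omega> k] by simp
    qed
    then obtain e where "e \<in> B" "\<epsilon> * real k < \<bar>\<Sum>s\<in>{1..k}. W e s \<omega>\<bar>" by blast
    then have "ennreal (real k powr r) \<le> R e \<omega>" using R \<omega> k by blast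
    also have "\<dots> \<le> (\<Sum>e\<in>B. R e \<omega>)" using \<open>e \<in> B\<close> B by (intro member_le_sum) auto
    finally show "ennreal (real k powr r) \<le> (\<Sum>e\<in>B. R e \<omega>)" .
  qed
qed

theorem mainTheorem6:
  fixes M :: "'o measure" and N :: "'a measure" and \<mu> :: "'a measure"
    and p :: "'a \<Rightarrow> real^'d \<Rightarrow> real"
    and G :: "'a \<Rightarrow> real^'d \<Rightarrow> real^'d"
    and H :: "'a \<Rightarrow> real^'d \<Rightarrow> real^'d^'d"
    and \<Theta> U :: "(real^'d) set"
    and \<theta> :: "real^'d" and r sigma2 :: real
    and Z :: "nat \<Rightarrow> 'o \<Rightarrow> 'a" and Zg :: "'o \<Rightarrow> 'a"
    and thetahat :: "nat \<Rightarrow> 'o \<Rightarrow> real^'d"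
  assumes r_pos: "r > 0"
    and Theta_compact: "compact \<Theta>" and Theta_convex: "convex \<Theta>"
    and base: "sets \<mu> = sets N"
    and dens_nonneg: "\<And>z \<rho>. z \<in> space N \<Longrightarrow> \<rho> \<in> \<Theta> \<Longrightarrow> p z \<rho> \<ge> 0"
    and dens_meas: "\<And>\<rho>. \<rho> \<in> \<Theta> \<Longrightarrow> (\<lambda>z. p z \<rho>) \<in> borel_measurable N"
    and dens_prob: "\<And>\<rho>. \<rho> \<in> \<Theta> \<Longrightarrow> prob_space (density \<mu> (\<lambda>z. ennreal (p z \<rho>)))"
    and U_open: "open U" and Theta_U: "\<Theta> \<subseteq> U"
    and grad: "\<And>z \<rho>. z \<in> space N \<Longrightarrow> \<rho> \<in> U \<Longrightarrow>
                 ((\<lambda>\<rho>'. ln (p z \<rho>')) has_derivative (\<lambda>h. G z \<rho> \<bullet> h)) (at \<rho>)"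
    and hess: "\<And>z \<rho>. z \<in> space N \<Longrightarrow> \<rho> \<in> U \<Longrightarrow>
                 (G z has_derivative (\<lambda>h. H z \<rho> *v h)) (at \<rho>)"
    and sigma_pos: "sigma2 > 0"
    and strong_conc: "\<And>z \<rho>. z \<in> space N \<Longrightarrow> \<rho> \<in> \<Theta> \<Longrightarrow> lambda_min (- H z \<rho>) \<ge> sigma2"
    and theta_in: "\<theta> \<in> \<Theta>"
    and M_prob: "prob_space M"
    and Z_meas: "\<And>s. s \<ge> 1 \<Longrightarrow> Z s \<in> measurable M N"
    and Z_indep: "prob_space.indep_vars M (\<lambda>_. N) Z {1..}"
    and Z_distr: "\<And>s. s \<ge> 1 \<Longrightarrow> distr M N (Z s) = density \<mu> (\<lambda>z. ennreal (p z \<theta>))"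
    and Zg_meas: "Zg \<in> measurable M N"
    and Zg_distr: "distr M N Zg = density \<mu> (\<lambda>z. ennreal (p z \<theta>))"
    and score_mean: "has_bochner_integral M (\<lambda>\<omega>. G (Zg \<omega>) \<theta>) 0"
    and score_moment: "integrable M (\<lambda>\<omega>. norm (G (Zg \<omega>) \<theta>) powr (r + 1))"
    and mle: "\<And>t \<omega>. t \<ge> 1 \<Longrightarrow> \<omega> \<in> space M \<Longrightarrow>
                 thetahat t \<omega> \<in> \<Theta> \<and>
                 (\<forall>\<rho>\<in>\<Theta>. (\<Sum>s\<in>{1..t}. ln (p (Z s \<omega>) \<rho>)) \<le> (\<Sum>s\<in>{1..t}. ln (p (Z s \<omega>) (thetahat t \<omega>))))"
  shows "r_quickly M r thetahat (\<lambda>_. \<theta>)"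
proof -
  interpret prob_space M by (fact M_prob)
  obtain B where B: "pairwise orthogonal B" "\<And>e. e \<in> B \<Longrightarrow> norm e = 1" "finite B"
    and span_B: "span B = span ((\<lambda>\<rho>. \<rho> - \<theta>) ` \<Theta>)"
    using orthonormal_basis_subspace[OF subspace_span] independent_imp_finite by metis
  have iid: "iid_zero_mean_moment M (\<lambda>s \<omega>. G (Z s \<omega>) \<theta> \<bullet> e) (\<lambda>\<omega>. G (Zg \<omega>) \<theta> \<bullet> e) r"
    if e: "e \<in> B" for e
  proof (rule iid_zero_mean_moment_inner[OF M_prob r_pos Z_indep _ Zg_meas _ _ score_mean score_moment])
    show "distr M N (Z s) = distr M N Zg" if "s \<ge> 1" for s
      using Z_distr[OF that] Zg_distr by simp
    show "(\<lambda>z. G z \<theta> \<bullet> e) \<in> borel_measurable N"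
      using e span_B Theta_U theta_in
      by (intro directional_derivative_measurable[OF Theta_convex theta_in, where f="\<lambda>z \<rho>. ln (p z \<rho>)"])
         (auto intro: span_base grad borel_measurable_ln dens_meas)
    show "norm e \<le> 1" using B(2)[OF e] by simp
  qed
  have dev: "sigma2 / 2 * real k * norm (thetahat k \<omega> - \<theta>) \<le> (\<Sum>e\<in>B. \<bar>\<Sum>s\<in>{1..k}. G (Z s \<omega>) \<theta> \<bullet> e\<bar>)"
    if \<omega>: "\<omega> \<in> space M" and k: "k \<ge> 1" for \<omega> k
  proof -
    have Z: "Z s \<omega> \<in> space N" if "s \<in> {1..k}" for s
      using measurable_space[OF Z_meas \<omega>] that by auto
    have "real (card {1..k}) * sigma2 / 2 * norm (thetahat k \<omega> - \<theta>)
        \<le> (\<Sum>e\<in>B. \<bar>\<Sum>s\<in>{1..k}. G (Z s \<omega>) \<theta> \<bullet> e\<bar>)"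
      using mle[OF k \<omega>] theta_in Z span_B
      by (intro argmax_dist_le_sum_abs_score[OF _ U_open Theta_convex Theta_U theta_in _ grad hess
            strong_conc _ B]) (auto intro: span_base)
    then show ?thesis by (simp add: mult_ac)
  qed
  show ?thesis
    by (rule r_quickly_of_iid_projections[where c="sigma2 / 2", OF M_prob r_pos B(3) _ iid dev])
       (use sigma_pos in auto)
qed

end
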